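(* Fix $p\in[1,\infty)$. Let $M=(X,K,\phi)$ and $N=(Y,L,\psi)$ be objects of $\mathsf{SMT}$, and let $M\prod N=(X\times Y,\,K\times L,\,\phi\times\psi)$ be their product in $\mathsf{SMT}$. Then the metric realizations satisfy a homotopy equivalence $$|M|\times|N|\;\simeq\;|M\textstyle\prod N|,$$ where $|M|\times|N|$ carries the product (maximum) metric.
   Context: $\mathsf{SMT}$ is the category whose objects are triples $(X,K,\phi)$ with $X$ a metric space, $K$ an abstract simplicial complex (vertex set $K^0$, family of nonempty finite subsets containing all singletons and closed under nonempty subsets) and $\phi\colon X\to K^0$ a bijection, and whose morphisms $(X,K,\phi)\to(Y,L,\psi)$ are pairs $(f,g)$ with $f$ a 1-Lipschitz map, $g$ a simplicial map and $\psi\circ f=g|_{K^0}\circ\phi$. The product $X\times Y$ of metric spaces carries the metric $d((x,y),(x',y'))=\max\{d(x,x'),d(y,y')\}$. The product $K\times L$ of simplicial complexes has vertex set $K^0\times L^0$, and a finite nonempty subset of $K^0\times L^0$ is a simplex iff its projection to $K^0$ is a simplex of $K$ and its projection to $L^0$ is a simplex of $L$. Metric realization: for an object $(X,K,\phi)$, $|(X,K,\phi)|$ is the set of finitely supported probability measures $\mu=\sum_{i=1}^n\lambda_i\delta_{x_i}$ on $X$ (distinct $x_i$, $\lambda_i>0$, $\sum\lambda_i=1$, $\delta_x$ the Dirac mass at $x$) such that $\phi(\mathrm{supp}\,\mu)=\phi(\{x_1,\dots,x_n\})$ is a simplex of $K$, equipped with the $p$-Wasserstein metric $W_p(\mu,\nu)=\inf_{\pi}\left(\int_{X\times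 X}d(x,y)^p\,d\pi(x,y)\right)^{1/p}$, the infimum over probability measures $\pi$ on $X\times X$ with marginals $\mu$ and $\nu$. *)

theory Defs
  imports "HOL-Analysis.Analysis"
begin

definition is_simplicial_complex :: "'v set \<Rightarrow> 'v set set \<Rightarrow> bool" where
  "is_simplicial_complex V K \<longleftrightarrow>
     (\<forall>\<sigma>\<in>K. \<sigma> \<noteq> {} \<and> finite \<sigma> \<and> \<sigma> \<subseteq> V) \<and>
     (\<forall>v\<in>V. {v} \<in> K) \<and>
     (\<forall>\<sigma>\<in>K. \<forall>\<tau>. \<tau> \<noteq> {} \<and> \<tau> \<subseteq> \<sigma> \<longrightarrow> \<tau> \<in> K)"

definition smt_obj :: "'a set \<Rightarrow> ('a \<Rightarrow> 'a \<Rightarrow> real) \<Rightarrow> 'v set \<Rightarrow> 'v set set \<Rightarrow> ('a \<Rightarrow> 'v) \<Rightarrow> bool" where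
  "smt_obj X d V K \<phi> \<longleftrightarrow> Metric_space X d \<and> is_simplicial_complex V K \<and> bij_betw \<phi> X V"

definition prod_sc :: "'v set set \<Rightarrow> 'w set set \<Rightarrow> ('v \<times> 'w) set set" where
  "prod_sc K L = {\<sigma>. \<sigma> \<noteq> {} \<and> finite \<sigma> \<and> fst ` \<sigma> \<in> K \<and> snd ` \<sigma> \<in> L}"

definition max_dist :: "('a \<Rightarrow> 'a \<Rightarrow> real) \<Rightarrow> ('b \<Rightarrow> 'b \<Rightarrow> real) \<Rightarrow> ('a \<times> 'b) \<Rightarrow> ('a \<times> 'b) \<Rightarrow> real" where
  "max_dist d e = (\<lambda>(x,y) (x',y'). max (d x x') (e y y'))"

text \<open>Finitely supported (probability) measures are represented by their mass functions.\<close>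
definition fsupp :: "('a \<Rightarrow> real) \<Rightarrow> 'a set" where
  "fsupp \<mu> = {x. \<mu> x \<noteq> 0}"

definition realization :: "'a set \<Rightarrow> 'v set set \<Rightarrow> ('a \<Rightarrow> 'v) \<Rightarrow> ('a \<Rightarrow> real) set" where
  "realization X K \<phi> = {\<mu>. finite (fsupp \<mu>) \<and> fsupp \<mu> \<subseteq> X \<and> (\<forall>x. 0 \<le> \<mu> x) \<and>
       sum \<mu> (fsupp \<mu>) = 1 \<and> \<phi> ` fsupp \<mu> \<in> K}"

text \<open>Couplings of two finitely supported probability measures (any coupling is
  supported on the finite set supp mu \<times> supp nu, hence finitely supported).\<close>
definition couplings :: "('a \<Rightarrow> real) \<Rightarrow> ('a \<Rightarrow> real) \<Rightarrow> ('a \<times> 'a \<Rightarrow> real) set" where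
  "couplings \<mu> \<nu> = {\<pi>. finite (fsupp \<pi>) \<and> (\<forall>z. 0 \<le> \<pi> z) \<and>
       (\<forall>x. (\<Sum>z\<in>fsupp \<pi> \<inter> {z. fst z = x}. \<pi> z) = \<mu> x) \<and>
       (\<forall>y. (\<Sum>z\<in>fsupp \<pi> \<inter> {z. snd z = y}. \<pi> z) = \<nu> y)}"

definition wasserstein :: "real \<Rightarrow> ('a \<Rightarrow> 'a \<Rightarrow> real) \<Rightarrow> ('a \<Rightarrow> real) \<Rightarrow> ('a \<Rightarrow> real) \<Rightarrow> real" where
  "wasserstein p d \<mu> \<nu> =
     (Inf {(\<Sum>z\<in>fsupp \<pi>. d (fst z) (snd z) powr p * \<pi> z) | \<pi>. \<pi> \<in> couplings \<mu> \<nu>}) powr (1 / p)"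

end

theory Submission
  imports Defs
begin

text \<open>
  The product measure \<open>F (\<mu>, \<nu>) = \<mu> \<otimes> \<nu>\<close> and the pair of marginals \<open>G \<pi>\<close> are homotopy inverse.
  Tensoring couplings of the factors gives a coupling of the products, and pushing a coupling forward
  along the projections gives couplings of the marginals; hence \<open>F\<close> is \<open>2 powr (1 / p)\<close>-Lipschitz and
  \<open>G\<close> is 1-Lipschitz. \<open>G \<circ> F\<close> is the identity, and \<open>F \<circ> G\<close> is joined to the identity by the straight-line
  homotopy \<open>H (t, \<pi>) = t \<pi> + (1 - t) F (G \<pi>)\<close>. It stays in the realization because the support of \<open>\<pi>\<close>
  lies in that of \<open>F (G \<pi>)\<close> and \<open>K \<times> L\<close> is closed under faces, and it is continuous because the
  \<open>p\<close>-th power of \<open>W\<^sub>p\<close> is jointly convex under mixtures, which yields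
  \<open>W\<^sub>p (H (t, \<pi>)) (H (s, \<pi>')) \<le> \<bar>t - s\<bar> powr (1 / p) * W\<^sub>p \<pi> (F (G \<pi>)) + (1 + 2 powr (1 / p)) * W\<^sub>p \<pi> \<pi>'\<close>.
  That \<open>W\<^sub>p\<close> is a metric at all comes from gluing couplings along a common marginal and
  Minkowski's inequality.
\<close>

section \<open>Finitely supported masses\<close>

definition finite_mass :: "('a \<Rightarrow> real) \<Rightarrow> bool" where
  "finite_mass \<mu> \<longleftrightarrow> finite (fsupp \<mu>) \<and> (\<forall>x. 0 \<le> \<mu> x)"

definition prob_mass :: "('a \<Rightarrow> real) \<Rightarrow> bool" where
  "prob_mass \<mu> \<longleftrightarrow> finite_mass \<mu> \<and> sum \<mu> (fsupp \<mu>) = 1"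

definition pushforward :: "('a \<Rightarrow> 'b) \<Rightarrow> ('a \<Rightarrow> real) \<Rightarrow> 'b \<Rightarrow> real" where
  "pushforward f \<mu> y = (\<Sum>x\<in>fsupp \<mu> \<inter> {x. f x = y}. \<mu> x)"

definition mass_integral :: "('a \<Rightarrow> real) \<Rightarrow> ('a \<Rightarrow> real) \<Rightarrow> real" where
  "mass_integral g \<mu> = (\<Sum>x\<in>fsupp \<mu>. g x * \<mu> x)"

lemma finite_mass_finite: "finite_mass \<mu> \<Longrightarrow> finite (fsupp \<mu>)"
  by (simp add: finite_mass_def)

lemma fsupp_conic: "fsupp (\<lambda>x. a * \<alpha> x + b * \<beta> x) \<subseteq> fsupp \<alpha> \<union> fsupp \<beta>"
  by (auto simp: fsupp_def)

lemma mass_integral_eq_sum: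
  assumes "finite S" "fsupp \<mu> \<subseteq> S"
  shows "mass_integral g \<mu> = (\<Sum>x\<in>S. g x * \<mu> x)"
  unfolding mass_integral_def by (rule sum.mono_neutral_left) (use assms in \<open>auto simp: fsupp_def\<close>)

lemma mass_integral_one: "mass_integral (\<lambda>x. 1) \<mu> = sum \<mu> (fsupp \<mu>)"
  by (simp add: mass_integral_def)

lemma mass_integral_nonneg:
  "(\<And>x. 0 \<le> \<mu> x) \<Longrightarrow> (\<And>x. x \<in> fsupp \<mu> \<Longrightarrow> 0 \<le> g x) \<Longrightarrow> 0 \<le> mass_integral g \<mu>"
  unfolding mass_integral_def by (intro sum_nonneg mult_nonneg_nonneg) auto

lemma mass_integral_mono:
  "(\<And>x. 0 \<le> \<mu> x) \<Longrightarrow> (\<And>x. x \<in> fsupp \<mu> \<Longrightarrow> g x \<le> h x) \<Longrightarrow> mass_integral g \<mu> \<le> mass_integral h \<mu>"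
  unfolding mass_integral_def by (intro sum_mono mult_right_mono) auto

lemma mass_integral_diff:
  "mass_integral (\<lambda>x. g x - h x) \<mu> = mass_integral g \<mu> - mass_integral h \<mu>"
  by (simp add: mass_integral_def left_diff_distrib sum_subtractf)

lemma mass_integral_add:
  "mass_integral (\<lambda>x. g x + h x) \<mu> = mass_integral g \<mu> + mass_integral h \<mu>"
  by (simp add: mass_integral_def distrib_right sum.distrib)

lemma mass_integral_cmult:
  "mass_integral (\<lambda>x. a * g x) \<mu> = a * mass_integral g \<mu>"
  by (simp add: mass_integral_def sum_distrib_left mult.assoc)

lemma mass_integral_conic:
  assumes "finite (fsupp \<alpha>)" "finite (fsupp \<beta>)"
  shows "mass_integral g (\<lambda>x. a * \<alpha> x + b * \<beta> x) = a * mass_integral g \<alpha> + b * mass_integral g \<beta>"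
  using assms fsupp_conic[of a \<alpha> b \<beta>]
  by (simp add: mass_integral_eq_sum[of "fsupp \<alpha> \<union> fsupp \<beta>"] sum.distrib sum_distrib_left algebra_simps)

lemma fsupp_pushforward: "fsupp (pushforward f \<mu>) \<subseteq> f ` fsupp \<mu>"
  by (force simp: fsupp_def pushforward_def intro: sum.neutral)

lemma finite_fsupp_pushforward: "finite (fsupp \<mu>) \<Longrightarrow> finite (fsupp (pushforward f \<mu>))"
  by (rule finite_subset[OF fsupp_pushforward]) simp

lemma finite_mass_pushforward: "finite_mass \<mu> \<Longrightarrow> finite_mass (pushforward f \<mu>)"
  using finite_fsupp_pushforward[of \<mu> f] by (auto simp: finite_mass_def pushforward_def intro: sum_nonneg)

lemma fsupp_pushforward_eq:
  assumes "finite_mass \<mu>"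
  shows "fsupp (pushforward f \<mu>) = f ` fsupp \<mu>"
proof (rule equalityI[OF fsupp_pushforward], rule image_subsetI)
  fix x assume x: "x \<in> fsupp \<mu>"
  have "0 < \<mu> x" using x assms by (auto simp: finite_mass_def fsupp_def order_le_less)
  also have "\<mu> x \<le> pushforward f \<mu> (f x)"
    unfolding pushforward_def using x assms by (intro member_le_sum) (auto simp: finite_mass_def)
  finally show "f x \<in> fsupp (pushforward f \<mu>)" by (simp add: fsupp_def)
qed

lemma pushforward_eq_sum:
  assumes "finite T" "inj_on h T" "\<And>t. t \<in> T \<Longrightarrow> f (h t) = y"
    and "\<And>x. x \<in> fsupp \<mu> \<Longrightarrow> f x = y \<Longrightarrow> x \<in> h ` T"
  shows "pushforward f \<mu> y = (\<Sum>t\<in>T. \<mu> (h t))"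
proof -
  have "(\<Sum>t\<in>T. \<mu> (h t)) = (\<Sum>x\<in>h ` T. \<mu> x)" by (simp add: sum.reindex assms(2))
  also have "\<dots> = pushforward f \<mu> y"
    unfolding pushforward_def
    by (rule sum.mono_neutral_right) (use assms in \<open>auto simp: fsupp_def\<close>)
  finally show ?thesis by simp
qed

lemma pushforward_eq_mass_integral:
  "finite (fsupp \<mu>) \<Longrightarrow> pushforward f \<mu> y = mass_integral (\<lambda>x. of_bool (f x = y)) \<mu>"
  by (auto simp: pushforward_def mass_integral_def sum.inter_restrict intro!: sum.cong)

lemma mass_integral_pushforward:
  assumes "finite (fsupp \<mu>)"
  shows "mass_integral g (pushforward f \<mu>) = mass_integral (\<lambda>x. g (f x)) \<mu>"
proof -
  let ?S = "fsupp \<mu>"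
  have "mass_integral g (pushforward f \<mu>) = (\<Sum>y\<in>f ` ?S. g y * pushforward f \<mu> y)"
    using assms fsupp_pushforward[of f \<mu>] by (intro mass_integral_eq_sum) auto
  also have "\<dots> = (\<Sum>y\<in>f ` ?S. \<Sum>x\<in>{x \<in> ?S. f x = y}. g (f x) * \<mu> x)"
    unfolding pushforward_def sum_distrib_left Int_Collect by (intro sum.cong refl) auto
  also have "\<dots> = mass_integral (\<lambda>x. g (f x)) \<mu>"
    unfolding mass_integral_def using assms by (intro sum.group) auto
  finally show ?thesis .
qed

lemma pushforward_comp:
  assumes "finite (fsupp \<mu>)"
  shows "pushforward g (pushforward f \<mu>) = pushforward (\<lambda>x. g (f x)) \<mu>"
proof
  fix z
  have "pushforward g (pushforward f \<mu>) z = mass_integral (\<lambda>y. of_bool (g y = z)) (pushforward f \<mu>)"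
    using assms by (intro pushforward_eq_mass_integral finite_fsupp_pushforward)
  also have "\<dots> = pushforward (\<lambda>x. g (f x)) \<mu> z"
    using assms by (simp add: mass_integral_pushforward pushforward_eq_mass_integral)
  finally show "pushforward g (pushforward f \<mu>) z = pushforward (\<lambda>x. g (f x)) \<mu> z" .
qed

lemma pushforward_id: "pushforward (\<lambda>x. x) \<mu> = \<mu>"
proof
  fix y
  have "fsupp \<mu> \<inter> {x. x = y} = (if \<mu> y = 0 then {} else {y})" by (auto simp: fsupp_def)
  then show "pushforward (\<lambda>x. x) \<mu> y = \<mu> y" by (simp add: pushforward_def)
qed

lemma pushforward_conic:
  assumes "finite (fsupp \<alpha>)" "finite (fsupp \<beta>)"
  shows "pushforward f (\<lambda>x. a * \<alpha> x + b * \<beta> x) = (\<lambda>y. a * pushforward f \<alpha> y + b * pushforward f \<beta> y)"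
proof -
  have "finite (fsupp (\<lambda>x. a * \<alpha> x + b * \<beta> x))"
    using assms by (intro finite_subset[OF fsupp_conic]) simp
  then show ?thesis
    using assms by (simp add: fun_eq_iff pushforward_eq_mass_integral mass_integral_conic)
qed

lemma prob_mass_pushforward: "prob_mass \<mu> \<Longrightarrow> prob_mass (pushforward f \<mu>)"
  using mass_integral_pushforward[of \<mu> "\<lambda>_. 1" f]
  by (simp add: prob_mass_def finite_mass_pushforward mass_integral_one finite_mass_finite)

lemma prob_mass_mix:
  assumes "prob_mass \<alpha>" "prob_mass \<beta>" "0 \<le> t" "t \<le> 1"
  shows "prob_mass (\<lambda>x. t * \<alpha> x + (1 - t) * \<beta> x)"
  using assms fsupp_conic[of t \<alpha> "1 - t" \<beta>] mass_integral_conic[of \<alpha> \<beta> "\<lambda>_. 1" t "1 - t"]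
  by (auto simp: prob_mass_def finite_mass_def mass_integral_one intro: finite_subset)

definition mass_prod :: "('a \<Rightarrow> real) \<Rightarrow> ('b \<Rightarrow> real) \<Rightarrow> 'a \<times> 'b \<Rightarrow> real" where
  "mass_prod \<mu> \<nu> z = \<mu> (fst z) * \<nu> (snd z)"

lemma fsupp_mass_prod: "fsupp (mass_prod \<mu> \<nu>) = fsupp \<mu> \<times> fsupp \<nu>"
  by (auto simp: fsupp_def mass_prod_def)

lemma finite_mass_mass_prod: "finite_mass \<mu> \<Longrightarrow> finite_mass \<nu> \<Longrightarrow> finite_mass (mass_prod \<mu> \<nu>)"
  by (simp add: finite_mass_def fsupp_mass_prod mass_prod_def)

lemma mass_integral_mass_prod:
  assumes "finite (fsupp \<mu>)" "finite (fsupp \<nu>)"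
  shows "mass_integral (\<lambda>z. g (fst z) * h (snd z)) (mass_prod \<mu> \<nu>) = mass_integral g \<mu> * mass_integral h \<nu>"
  using assms by (simp add: mass_integral_def fsupp_mass_prod sum_product sum.cartesian_product
      mass_prod_def case_prod_beta algebra_simps)

lemma prob_mass_mass_prod:
  assumes "prob_mass \<mu>" "prob_mass \<nu>"
  shows "prob_mass (mass_prod \<mu> \<nu>)"
  using assms mass_integral_mass_prod[of \<mu> \<nu> "\<lambda>_. 1" "\<lambda>_. 1"] finite_mass_mass_prod[of \<mu> \<nu>]
  by (simp add: prob_mass_def mass_integral_one finite_mass_finite)

lemma pushforward_map_prod_mass_prod:
  assumes "finite (fsupp \<mu>)" "finite (fsupp \<nu>)"
  shows "pushforward (map_prod f g) (mass_prod \<mu> \<nu>) = mass_prod (pushforward f \<mu>) (pushforward g \<nu>)"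
proof
  fix z :: "'c \<times> 'd"
  obtain a b where z: "z = (a, b)" by fastforce
  let ?A = "fsupp \<mu> \<inter> {x. f x = a}" and ?B = "fsupp \<nu> \<inter> {y. g y = b}"
  have "pushforward (map_prod f g) (mass_prod \<mu> \<nu>) z = (\<Sum>w\<in>?A \<times> ?B. mass_prod \<mu> \<nu> w)"
    using assms z by (intro pushforward_eq_sum[where h = "\<lambda>w. w"]) (auto simp: fsupp_mass_prod)
  also have "\<dots> = mass_prod (pushforward f \<mu>) (pushforward g \<nu>) z"
    by (simp add: z mass_prod_def pushforward_def sum_product sum.cartesian_product case_prod_beta)
  finally show "pushforward (map_prod f g) (mass_prod \<mu> \<nu>) z = mass_prod (pushforward f \<mu>) (pushforward g \<nu>) z" .
qed

lemma pushforward_fst_mass_prod: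
  assumes "finite (fsupp \<nu>)"
  shows "pushforward fst (mass_prod \<mu> \<nu>) = (\<lambda>x. \<mu> x * sum \<nu> (fsupp \<nu>))"
proof
  fix x
  have "pushforward fst (mass_prod \<mu> \<nu>) x = (\<Sum>y\<in>fsupp \<nu>. mass_prod \<mu> \<nu> (x, y))"
    using assms by (intro pushforward_eq_sum) (auto simp: fsupp_mass_prod inj_on_def)
  then show "pushforward fst (mass_prod \<mu> \<nu>) x = \<mu> x * sum \<nu> (fsupp \<nu>)"
    by (simp add: mass_prod_def sum_distrib_left)
qed

lemma pushforward_snd_mass_prod:
  assumes "finite (fsupp \<mu>)"
  shows "pushforward snd (mass_prod \<mu> \<nu>) = (\<lambda>y. sum \<mu> (fsupp \<mu>) * \<nu> y)"
proof
  fix y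
  have "pushforward snd (mass_prod \<mu> \<nu>) y = (\<Sum>x\<in>fsupp \<mu>. mass_prod \<mu> \<nu> (x, y))"
    using assms by (intro pushforward_eq_sum[where h = "\<lambda>x. (x, y)"]) (auto simp: fsupp_mass_prod inj_on_def)
  then show "pushforward snd (mass_prod \<mu> \<nu>) y = sum \<mu> (fsupp \<mu>) * \<nu> y"
    by (simp add: mass_prod_def sum_distrib_right)
qed

lemma marginals_mass_prod:
  assumes "prob_mass \<mu>" "prob_mass \<nu>"
  shows "pushforward fst (mass_prod \<mu> \<nu>) = \<mu>" "pushforward snd (mass_prod \<mu> \<nu>) = \<nu>"
  using assms by (simp_all add: prob_mass_def finite_mass_finite pushforward_fst_mass_prod pushforward_snd_mass_prod)

section \<open>Couplings and the optimal transport cost\<close>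

lemma couplings_iff:
  "\<gamma> \<in> couplings \<mu> \<nu> \<longleftrightarrow> finite_mass \<gamma> \<and> pushforward fst \<gamma> = \<mu> \<and> pushforward snd \<gamma> = \<nu>"
  by (auto simp: couplings_def finite_mass_def pushforward_def fun_eq_iff)

lemma fsupp_couplings:
  assumes "\<gamma> \<in> couplings \<mu> \<nu>"
  shows "fsupp \<gamma> \<subseteq> fsupp \<mu> \<times> fsupp \<nu>"
  using assms fsupp_pushforward_eq[of \<gamma> fst] fsupp_pushforward_eq[of \<gamma> snd]
  by (force simp: couplings_iff)

lemma prob_mass_couplings:
  assumes "\<gamma> \<in> couplings \<mu> \<nu>" "prob_mass \<mu>"
  shows "prob_mass \<gamma>"
proof -
  have "finite_mass \<gamma>" "pushforward fst \<gamma> = \<mu>" using assms(1) by (auto simp: couplings_iff)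
  then show ?thesis
    using assms(2) mass_integral_pushforward[of \<gamma> "\<lambda>_. 1" fst]
    by (simp add: prob_mass_def mass_integral_one finite_mass_finite)
qed

lemma couplings_conic:
  assumes "\<gamma>1 \<in> couplings \<alpha>1 \<beta>1" "\<gamma>2 \<in> couplings \<alpha>2 \<beta>2" "0 \<le> a" "0 \<le> b"
  shows "(\<lambda>z. a * \<gamma>1 z + b * \<gamma>2 z) \<in> couplings (\<lambda>x. a * \<alpha>1 x + b * \<alpha>2 x) (\<lambda>y. a * \<beta>1 y + b * \<beta>2 y)"
proof -
  have "finite (fsupp (\<lambda>z. a * \<gamma>1 z + b * \<gamma>2 z))"
    using assms by (intro finite_subset[OF fsupp_conic]) (auto simp: couplings_iff finite_mass_def)
  then show ?thesis
    using assms by (auto simp: couplings_iff finite_mass_def pushforward_conic)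
qed

lemma couplings_pushforward:
  assumes "\<gamma> \<in> couplings \<mu> \<nu>"
  shows "pushforward (map_prod f g) \<gamma> \<in> couplings (pushforward f \<mu>) (pushforward g \<nu>)"
proof -
  have \<gamma>: "finite_mass \<gamma>" "\<mu> = pushforward fst \<gamma>" "\<nu> = pushforward snd \<gamma>"
    using assms by (auto simp: couplings_iff)
  show ?thesis unfolding \<gamma>(2,3) couplings_iff
    using \<gamma>(1) by (simp add: finite_mass_pushforward pushforward_comp finite_mass_finite)
qed

lemma couplings_swap:
  assumes "\<gamma> \<in> couplings \<mu> \<nu>"
  shows "pushforward prod.swap \<gamma> \<in> couplings \<nu> \<mu>"
proof -
  have \<gamma>: "finite_mass \<gamma>" "\<mu> = pushforward fst \<gamma>" "\<nu> = pushforward snd \<gamma>"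
    using assms by (auto simp: couplings_iff)
  show ?thesis unfolding \<gamma>(2,3) couplings_iff
    using \<gamma>(1) by (simp add: finite_mass_pushforward pushforward_comp finite_mass_finite)
qed

lemma couplings_diag:
  assumes "finite_mass \<alpha>"
  shows "pushforward (\<lambda>x. (x, x)) \<alpha> \<in> couplings \<alpha> \<alpha>"
  using assms
  by (simp add: couplings_iff finite_mass_pushforward pushforward_comp pushforward_id finite_mass_finite)

lemma mass_prod_in_couplings:
  assumes "prob_mass \<mu>" "prob_mass \<nu>"
  shows "mass_prod \<mu> \<nu> \<in> couplings \<mu> \<nu>"
  using assms by (simp add: couplings_iff prob_mass_def finite_mass_mass_prod marginals_mass_prod)

lemma couplings_nonempty: "prob_mass \<mu> \<Longrightarrow> prob_mass \<nu> \<Longrightarrow> couplings \<mu> \<nu> \<noteq> {}"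
  using mass_prod_in_couplings by blast

definition transport_cost :: "real \<Rightarrow> ('a \<Rightarrow> 'a \<Rightarrow> real) \<Rightarrow> ('a \<times> 'a \<Rightarrow> real) \<Rightarrow> real" where
  "transport_cost p c \<gamma> = mass_integral (\<lambda>z. c (fst z) (snd z) powr p) \<gamma>"

definition optimal_cost :: "real \<Rightarrow> ('a \<Rightarrow> 'a \<Rightarrow> real) \<Rightarrow> ('a \<Rightarrow> real) \<Rightarrow> ('a \<Rightarrow> real) \<Rightarrow> real" where
  "optimal_cost p c \<mu> \<nu> = Inf {transport_cost p c \<gamma> | \<gamma>. \<gamma> \<in> couplings \<mu> \<nu>}"

lemma wasserstein_eq_optimal_cost: "wasserstein p c \<mu> \<nu> = optimal_cost p c \<mu> \<nu> powr (1 / p)"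
  by (simp add: wasserstein_def optimal_cost_def transport_cost_def mass_integral_def)

lemma transport_cost_nonneg: "\<gamma> \<in> couplings \<mu> \<nu> \<Longrightarrow> 0 \<le> transport_cost p c \<gamma>"
  unfolding transport_cost_def by (rule mass_integral_nonneg) (auto simp: couplings_iff finite_mass_def)

lemma transport_cost_pushforward:
  "finite (fsupp \<gamma>) \<Longrightarrow>
   transport_cost p c (pushforward (map_prod f g) \<gamma>) = mass_integral (\<lambda>z. c (f (fst z)) (g (snd z)) powr p) \<gamma>"
  by (simp add: transport_cost_def mass_integral_pushforward)

lemma optimal_cost_le: "\<gamma> \<in> couplings \<mu> \<nu> \<Longrightarrow> optimal_cost p c \<mu> \<nu> \<le> transport_cost p c \<gamma>"
  unfolding optimal_cost_def by (rule cInf_lower) (auto intro!: bdd_belowI[of _ 0] transport_cost_nonneg)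

lemma optimal_cost_nonneg: "couplings \<mu> \<nu> \<noteq> {} \<Longrightarrow> 0 \<le> optimal_cost p c \<mu> \<nu>"
  unfolding optimal_cost_def by (rule cInf_greatest) (auto intro: transport_cost_nonneg)

lemma optimal_cost_approx:
  "couplings \<mu> \<nu> \<noteq> {} \<Longrightarrow> optimal_cost p c \<mu> \<nu> < r \<Longrightarrow> \<exists>\<gamma>\<in>couplings \<mu> \<nu>. transport_cost p c \<gamma> < r"
  unfolding optimal_cost_def using cInf_lessD[of "{transport_cost p c \<gamma> | \<gamma>. \<gamma> \<in> couplings \<mu> \<nu>}" r] by auto

lemma optimal_cost_le_combination:
  assumes ne: "couplings \<alpha>1 \<beta>1 \<noteq> {}" "couplings \<alpha>2 \<beta>2 \<noteq> {}" and ab: "0 \<le> a" "0 \<le> b"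
    and comb: "\<And>\<gamma>1 \<gamma>2. \<gamma>1 \<in> couplings \<alpha>1 \<beta>1 \<Longrightarrow> \<gamma>2 \<in> couplings \<alpha>2 \<beta>2 \<Longrightarrow>
      \<exists>\<gamma>\<in>couplings \<alpha> \<beta>. transport_cost p c \<gamma> \<le> a * transport_cost p c1 \<gamma>1 + b * transport_cost p c2 \<gamma>2"
  shows "optimal_cost p c \<alpha> \<beta> \<le> a * optimal_cost p c1 \<alpha>1 \<beta>1 + b * optimal_cost p c2 \<alpha>2 \<beta>2"
proof (rule field_le_epsilon)
  fix \<epsilon> :: real assume "0 < \<epsilon>"
  define \<eta> where "\<eta> = \<epsilon> / (a + b + 1)"
  have \<eta>: "0 < \<eta>" "(a + b) * \<eta> \<le> \<epsilon>"
    using \<open>0 < \<epsilon>\<close> ab by (auto simp: \<eta>_def field_simps)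
  obtain \<gamma>1 where \<gamma>1: "\<gamma>1 \<in> couplings \<alpha>1 \<beta>1" "transport_cost p c1 \<gamma>1 < optimal_cost p c1 \<alpha>1 \<beta>1 + \<eta>"
    using optimal_cost_approx[OF ne(1), of p c1 "optimal_cost p c1 \<alpha>1 \<beta>1 + \<eta>"] \<eta>(1) by auto
  obtain \<gamma>2 where \<gamma>2: "\<gamma>2 \<in> couplings \<alpha>2 \<beta>2" "transport_cost p c2 \<gamma>2 < optimal_cost p c2 \<alpha>2 \<beta>2 + \<eta>"
    using optimal_cost_approx[OF ne(2), of p c2 "optimal_cost p c2 \<alpha>2 \<beta>2 + \<eta>"] \<eta>(1) by auto
  obtain \<gamma> where \<gamma>: "\<gamma> \<in> couplings \<alpha> \<beta>"
    "transport_cost p c \<gamma> \<le> a * transport_cost p c1 \<gamma>1 + b * transport_cost p c2 \<gamma>2"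
    using comb[OF \<gamma>1(1) \<gamma>2(1)] by blast
  have "optimal_cost p c \<alpha> \<beta> \<le> transport_cost p c \<gamma>" by (rule optimal_cost_le[OF \<gamma>(1)])
  also have "\<dots> \<le> a * (optimal_cost p c1 \<alpha>1 \<beta>1 + \<eta>) + b * (optimal_cost p c2 \<alpha>2 \<beta>2 + \<eta>)"
    using \<gamma>(2) \<gamma>1(2) \<gamma>2(2) ab
    by (meson add_mono less_imp_le mult_left_mono order.trans)
  also have "\<dots> \<le> a * optimal_cost p c1 \<alpha>1 \<beta>1 + b * optimal_cost p c2 \<alpha>2 \<beta>2 + \<epsilon>"
    using \<eta>(2) by (simp add: algebra_simps)
  finally show "optimal_cost p c \<alpha> \<beta> \<le> a * optimal_cost p c1 \<alpha>1 \<beta>1 + b * optimal_cost p c2 \<alpha>2 \<beta>2 + \<epsilon>" .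
qed

lemma optimal_cost_self:
  assumes "finite_mass \<alpha>" "\<And>x. x \<in> fsupp \<alpha> \<Longrightarrow> c x x = 0"
  shows "optimal_cost p c \<alpha> \<alpha> = 0"
proof -
  let ?\<gamma> = "pushforward (\<lambda>x. (x, x)) \<alpha>"
  have "transport_cost p c ?\<gamma> = mass_integral (\<lambda>x. c x x powr p) \<alpha>"
    using assms(1) by (simp add: transport_cost_def mass_integral_pushforward finite_mass_finite)
  also have "\<dots> = 0" using assms(2) by (simp add: mass_integral_def)
  finally have "optimal_cost p c \<alpha> \<alpha> \<le> 0" using optimal_cost_le[OF couplings_diag[OF assms(1)], of p c] by simp
  moreover have "0 \<le> optimal_cost p c \<alpha> \<alpha>"
    using couplings_diag[OF assms(1)] by (intro optimal_cost_nonneg) blast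
  ultimately show ?thesis by linarith
qed

lemma optimal_cost_commute:
  assumes "\<And>x y. c x y = c y x"
  shows "optimal_cost p c \<mu> \<nu> = optimal_cost p c \<nu> \<mu>"
proof -
  have swap: "{transport_cost p c \<gamma> | \<gamma>. \<gamma> \<in> couplings \<mu>' \<nu>'} \<subseteq> {transport_cost p c \<gamma> | \<gamma>. \<gamma> \<in> couplings \<nu>' \<mu>'}"
    for \<mu>' \<nu>'
  proof clarify
    fix \<gamma> assume \<gamma>: "\<gamma> \<in> couplings \<mu>' \<nu>'"
    then have "transport_cost p c (pushforward prod.swap \<gamma>) = transport_cost p c \<gamma>"
      using assms by (simp add: transport_cost_def mass_integral_pushforward couplings_iff finite_mass_finite)
    then show "\<exists>\<gamma>'. transport_cost p c \<gamma> = transport_cost p c \<gamma>' \<and> \<gamma>' \<in> couplings \<nu>' \<mu>'"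
      using couplings_swap[OF \<gamma>] by metis
  qed
  show ?thesis unfolding optimal_cost_def by (rule arg_cong[where f = Inf], rule subset_antisym[OF swap swap])
qed

lemma optimal_cost_pushforward_le:
  assumes "couplings \<mu> \<nu> \<noteq> {}" "0 \<le> p" "\<And>x y. 0 \<le> c x y" "\<And>x y. c (f x) (f y) \<le> D x y"
  shows "optimal_cost p c (pushforward f \<mu>) (pushforward f \<nu>) \<le> optimal_cost p D \<mu> \<nu>"
  unfolding optimal_cost_def[of p D]
proof (rule cInf_greatest)
  show "{transport_cost p D \<gamma> |\<gamma>. \<gamma> \<in> couplings \<mu> \<nu>} \<noteq> {}" using assms(1) by blast
  fix r assume "r \<in> {transport_cost p D \<gamma> |\<gamma>. \<gamma> \<in> couplings \<mu> \<nu>}"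
  then obtain \<gamma> where \<gamma>: "\<gamma> \<in> couplings \<mu> \<nu>" and r: "r = transport_cost p D \<gamma>" by blast
  have "optimal_cost p c (pushforward f \<mu>) (pushforward f \<nu>) \<le> transport_cost p c (pushforward (map_prod f f) \<gamma>)"
    using couplings_pushforward[OF \<gamma>] by (rule optimal_cost_le)
  also have "\<dots> = mass_integral (\<lambda>z. c (f (fst z)) (f (snd z)) powr p) \<gamma>"
    using \<gamma> by (simp add: transport_cost_pushforward couplings_iff finite_mass_finite)
  also have "\<dots> \<le> r"
    unfolding r transport_cost_def using \<gamma> assms(2-4)
    by (intro mass_integral_mono powr_mono2) (auto simp: couplings_iff finite_mass_def)
  finally show "optimal_cost p c (pushforward f \<mu>) (pushforward f \<nu>) \<le> r" .
qed

lemma max_powr_le_add_powr: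
  fixes a b p :: real
  shows "0 \<le> a \<Longrightarrow> 0 \<le> b \<Longrightarrow> max a b powr p \<le> a powr p + b powr p"
  by (cases "a \<le> b") (auto simp: max_def)

definition coupling_prod :: "('a \<times> 'a \<Rightarrow> real) \<Rightarrow> ('b \<times> 'b \<Rightarrow> real) \<Rightarrow> ('a \<times> 'b) \<times> ('a \<times> 'b) \<Rightarrow> real" where
  "coupling_prod \<gamma>1 \<gamma>2 = pushforward (\<lambda>w. ((fst (fst w), fst (snd w)), (snd (fst w), snd (snd w)))) (mass_prod \<gamma>1 \<gamma>2)"

lemma coupling_prod_in_couplings:
  assumes "\<gamma>1 \<in> couplings \<mu> \<mu>'" "\<gamma>2 \<in> couplings \<nu> \<nu>'"
  shows "coupling_prod \<gamma>1 \<gamma>2 \<in> couplings (mass_prod \<mu> \<nu>) (mass_prod \<mu>' \<nu>')"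
proof -
  have fm: "finite_mass \<gamma>1" "finite_mass \<gamma>2" using assms by (simp_all add: couplings_iff)
  then have fin: "finite (fsupp (mass_prod \<gamma>1 \<gamma>2))" by (simp add: finite_mass_finite finite_mass_mass_prod)
  have "pushforward fst (coupling_prod \<gamma>1 \<gamma>2) = pushforward (map_prod fst fst) (mass_prod \<gamma>1 \<gamma>2)"
    "pushforward snd (coupling_prod \<gamma>1 \<gamma>2) = pushforward (map_prod snd snd) (mass_prod \<gamma>1 \<gamma>2)"
    using fin by (simp_all add: coupling_prod_def pushforward_comp map_prod_def case_prod_unfold)
  then show ?thesis
    using assms fm finite_mass_mass_prod[OF fm]
    by (simp add: couplings_iff coupling_prod_def finite_mass_pushforward pushforward_map_prod_mass_prod finite_mass_finite)
qed

lemma transport_cost_coupling_prod_le: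
  assumes "prob_mass \<gamma>1" "prob_mass \<gamma>2" "\<And>x y. 0 \<le> d x y" "\<And>x y. 0 \<le> e x y"
  shows "transport_cost p (max_dist d e) (coupling_prod \<gamma>1 \<gamma>2) \<le> transport_cost p d \<gamma>1 + transport_cost p e \<gamma>2"
proof -
  have fin: "finite (fsupp \<gamma>1)" "finite (fsupp \<gamma>2)" "finite (fsupp (mass_prod \<gamma>1 \<gamma>2))"
    using assms(1,2) by (auto simp: prob_mass_def finite_mass_def fsupp_mass_prod)
  have "transport_cost p (max_dist d e) (coupling_prod \<gamma>1 \<gamma>2)
      = mass_integral (\<lambda>w. max (d (fst (fst w)) (snd (fst w))) (e (fst (snd w)) (snd (snd w))) powr p)
          (mass_prod \<gamma>1 \<gamma>2)"
    using fin by (simp add: coupling_prod_def transport_cost_def mass_integral_pushforward max_dist_def)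
  also have "\<dots> \<le> mass_integral (\<lambda>w. d (fst (fst w)) (snd (fst w)) powr p * 1 + 1 * e (fst (snd w)) (snd (snd w)) powr p)
          (mass_prod \<gamma>1 \<gamma>2)"
    using assms by (intro mass_integral_mono)
      (auto simp: max_powr_le_add_powr mass_prod_def prob_mass_def finite_mass_def)
  also have "\<dots> = transport_cost p d \<gamma>1 * mass_integral (\<lambda>_. 1) \<gamma>2 + mass_integral (\<lambda>_. 1) \<gamma>1 * transport_cost p e \<gamma>2"
    unfolding mass_integral_add transport_cost_def
    by (simp only: mass_integral_mass_prod[OF fin(1,2), of "\<lambda>z. d (fst z) (snd z) powr p" "\<lambda>_. 1"]
        mass_integral_mass_prod[OF fin(1,2), of "\<lambda>_. 1" "\<lambda>z. e (fst z) (snd z) powr p"])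
  also have "\<dots> = transport_cost p d \<gamma>1 + transport_cost p e \<gamma>2"
    using assms(1,2) by (simp add: mass_integral_one prob_mass_def)
  finally show ?thesis .
qed

lemma optimal_cost_mass_prod_le:
  assumes "prob_mass \<mu>" "prob_mass \<mu>'" "prob_mass \<nu>" "prob_mass \<nu>'"
    and "\<And>x y. 0 \<le> d x y" "\<And>x y. 0 \<le> e x y"
  shows "optimal_cost p (max_dist d e) (mass_prod \<mu> \<nu>) (mass_prod \<mu>' \<nu>') \<le> optimal_cost p d \<mu> \<mu>' + optimal_cost p e \<nu> \<nu>'"
proof -
  have "optimal_cost p (max_dist d e) (mass_prod \<mu> \<nu>) (mass_prod \<mu>' \<nu>')
      \<le> 1 * optimal_cost p d \<mu> \<mu>' + 1 * optimal_cost p e \<nu> \<nu>'"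
  proof (rule optimal_cost_le_combination)
    fix \<gamma>1 \<gamma>2 assume \<gamma>: "\<gamma>1 \<in> couplings \<mu> \<mu>'" "\<gamma>2 \<in> couplings \<nu> \<nu>'"
    have "transport_cost p (max_dist d e) (coupling_prod \<gamma>1 \<gamma>2) \<le> transport_cost p d \<gamma>1 + transport_cost p e \<gamma>2"
      using \<gamma> assms by (intro transport_cost_coupling_prod_le prob_mass_couplings) auto
    then show "\<exists>\<Gamma>\<in>couplings (mass_prod \<mu> \<nu>) (mass_prod \<mu>' \<nu>').
        transport_cost p (max_dist d e) \<Gamma> \<le> 1 * transport_cost p d \<gamma>1 + 1 * transport_cost p e \<gamma>2"
      using coupling_prod_in_couplings[OF \<gamma>] by auto
  qed (simp_all add: couplings_nonempty assms)
  then show ?thesis by simp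
qed

lemma optimal_cost_mix_le:
  assumes "couplings \<alpha> \<alpha>' \<noteq> {}" "couplings \<beta> \<beta>' \<noteq> {}" "0 \<le> t" "t \<le> 1"
  shows "optimal_cost p c (\<lambda>x. t * \<alpha> x + (1 - t) * \<beta> x) (\<lambda>x. t * \<alpha>' x + (1 - t) * \<beta>' x)
    \<le> t * optimal_cost p c \<alpha> \<alpha>' + (1 - t) * optimal_cost p c \<beta> \<beta>'"
proof (rule optimal_cost_le_combination[OF assms(1,2)])
  fix \<gamma>1 \<gamma>2 assume \<gamma>: "\<gamma>1 \<in> couplings \<alpha> \<alpha>'" "\<gamma>2 \<in> couplings \<beta> \<beta>'"
  let ?\<gamma> = "\<lambda>z. t * \<gamma>1 z + (1 - t) * \<gamma>2 z"
  have "?\<gamma> \<in> couplings (\<lambda>x. t * \<alpha> x + (1 - t) * \<beta> x) (\<lambda>x. t * \<alpha>' x + (1 - t) * \<beta>' x)"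
    using couplings_conic[OF \<gamma>, of t "1 - t"] assms(3,4) by simp
  moreover have "transport_cost p c ?\<gamma> = t * transport_cost p c \<gamma>1 + (1 - t) * transport_cost p c \<gamma>2"
    using \<gamma> by (simp add: transport_cost_def mass_integral_conic couplings_iff finite_mass_finite)
  ultimately show "\<exists>\<gamma>\<in>couplings (\<lambda>x. t * \<alpha> x + (1 - t) * \<beta> x) (\<lambda>x. t * \<alpha>' x + (1 - t) * \<beta>' x).
      transport_cost p c \<gamma> \<le> t * transport_cost p c \<gamma>1 + (1 - t) * transport_cost p c \<gamma>2"
    by (intro bexI[of _ ?\<gamma>]) simp_all
qed (use assms in auto)

lemma optimal_cost_mix_shift_le:
  assumes "finite_mass \<alpha>" "finite_mass \<beta>" "couplings \<alpha> \<beta> \<noteq> {}"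
    and "\<And>x. x \<in> fsupp \<alpha> \<union> fsupp \<beta> \<Longrightarrow> c x x = 0"
    and "0 \<le> s" "s \<le> t" "t \<le> 1"
  shows "optimal_cost p c (\<lambda>x. t * \<alpha> x + (1 - t) * \<beta> x) (\<lambda>x. s * \<alpha> x + (1 - s) * \<beta> x)
    \<le> (t - s) * optimal_cost p c \<alpha> \<beta>"
proof -
  \<comment> \<open>The common part \<open>\<kappa>\<close> stays in place; only the mass \<open>t - s\<close> moves, from \<open>\<alpha>\<close> to \<open>\<beta>\<close>.\<close>
  define \<kappa> where "\<kappa> x = s * \<alpha> x + (1 - t) * \<beta> x" for x
  have s\<kappa>: "fsupp \<kappa> \<subseteq> fsupp \<alpha> \<union> fsupp \<beta>"
    unfolding \<kappa>_def by (rule fsupp_conic)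
  then have \<kappa>: "finite_mass \<kappa>" using assms by (auto simp: finite_mass_def \<kappa>_def intro: finite_subset)
  have "optimal_cost p c (\<lambda>x. t * \<alpha> x + (1 - t) * \<beta> x) (\<lambda>x. s * \<alpha> x + (1 - s) * \<beta> x)
      \<le> 1 * optimal_cost p c \<kappa> \<kappa> + (t - s) * optimal_cost p c \<alpha> \<beta>"
  proof (rule optimal_cost_le_combination[OF _ assms(3)])
    fix \<gamma>1 \<gamma>2 assume \<gamma>: "\<gamma>1 \<in> couplings \<kappa> \<kappa>" "\<gamma>2 \<in> couplings \<alpha> \<beta>"
    have "(\<lambda>x. 1 * \<kappa> x + (t - s) * \<alpha> x) = (\<lambda>x. t * \<alpha> x + (1 - t) * \<beta> x)"
      "(\<lambda>x. 1 * \<kappa> x + (t - s) * \<beta> x) = (\<lambda>x. s * \<alpha> x + (1 - s) * \<beta> x)"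
      by (auto simp: \<kappa>_def fun_eq_iff algebra_simps)
    then have "(\<lambda>z. 1 * \<gamma>1 z + (t - s) * \<gamma>2 z) \<in>
        couplings (\<lambda>x. t * \<alpha> x + (1 - t) * \<beta> x) (\<lambda>x. s * \<alpha> x + (1 - s) * \<beta> x)"
      using couplings_conic[OF \<gamma>, of 1 "t - s"] assms(6) by simp
    moreover have "transport_cost p c (\<lambda>z. 1 * \<gamma>1 z + (t - s) * \<gamma>2 z)
        = 1 * transport_cost p c \<gamma>1 + (t - s) * transport_cost p c \<gamma>2"
      using \<gamma> by (simp only: transport_cost_def mass_integral_conic couplings_iff finite_mass_finite)
    ultimately show "\<exists>\<gamma>\<in>couplings (\<lambda>x. t * \<alpha> x + (1 - t) * \<beta> x) (\<lambda>x. s * \<alpha> x + (1 - s) * \<beta> x).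
        transport_cost p c \<gamma> \<le> 1 * transport_cost p c \<gamma>1 + (t - s) * transport_cost p c \<gamma>2"
      by (intro bexI[of _ "\<lambda>z. 1 * \<gamma>1 z + (t - s) * \<gamma>2 z"]) simp_all
  qed (use couplings_diag[OF \<kappa>] assms(6) in auto)
  also have "\<dots> = (t - s) * optimal_cost p c \<alpha> \<beta>"
    using optimal_cost_self[OF \<kappa>] assms(4) s\<kappa> by auto
  finally show ?thesis .
qed

lemma optimal_cost_ge_separation:
  assumes "couplings \<mu> \<nu> \<noteq> {}" "0 \<le> m" "0 \<le> p" "\<And>x y. 0 \<le> c x y"
    and sep: "\<And>x y. x \<in> fsupp \<mu> \<Longrightarrow> y \<in> fsupp \<nu> \<Longrightarrow> x \<noteq> y \<Longrightarrow> m \<le> c x y"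
  shows "m powr p * \<bar>\<mu> x - \<nu> x\<bar> \<le> optimal_cost p c \<mu> \<nu>"
  unfolding optimal_cost_def
proof (rule cInf_greatest)
  show "{transport_cost p c \<gamma> |\<gamma>. \<gamma> \<in> couplings \<mu> \<nu>} \<noteq> {}" using assms(1) by blast
  fix r assume "r \<in> {transport_cost p c \<gamma> |\<gamma>. \<gamma> \<in> couplings \<mu> \<nu>}"
  then obtain \<gamma> where \<gamma>: "\<gamma> \<in> couplings \<mu> \<nu>" and r: "r = transport_cost p c \<gamma>" by blast
  have fm: "finite_mass \<gamma>" and marg: "\<mu> = pushforward fst \<gamma>" "\<nu> = pushforward snd \<gamma>"
    using \<gamma> by (auto simp: couplings_iff)
  have nn: "\<And>z. 0 \<le> \<gamma> z" using fm unfolding finite_mass_def by blast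
  \<comment> \<open>Only mass off the diagonal can account for the difference of the marginals at \<open>x\<close>.\<close>
  let ?off = "mass_integral (\<lambda>w. of_bool (fst w \<noteq> snd w)) \<gamma>"
  have "\<mu> x - \<nu> x = mass_integral (\<lambda>w. of_bool (fst w = x) - of_bool (snd w = x)) \<gamma>"
    "\<nu> x - \<mu> x = mass_integral (\<lambda>w. of_bool (snd w = x) - of_bool (fst w = x)) \<gamma>"
    using fm by (simp_all add: marg mass_integral_diff pushforward_eq_mass_integral finite_mass_finite)
  moreover have "mass_integral (\<lambda>w. of_bool (fst w = x) - of_bool (snd w = x)) \<gamma> \<le> ?off"
    "mass_integral (\<lambda>w. of_bool (snd w = x) - of_bool (fst w = x)) \<gamma> \<le> ?off"
    using nn by (auto intro!: mass_integral_mono)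
  ultimately have "\<bar>\<mu> x - \<nu> x\<bar> \<le> ?off" by linarith
  then have "m powr p * \<bar>\<mu> x - \<nu> x\<bar> \<le> mass_integral (\<lambda>w. m powr p * of_bool (fst w \<noteq> snd w)) \<gamma>"
    by (simp add: mass_integral_cmult mult_left_mono)
  also have "\<dots> \<le> r"
    unfolding r transport_cost_def
  proof (rule mass_integral_mono[OF nn])
    fix w assume "w \<in> fsupp \<gamma>"
    then have "fst w \<in> fsupp \<mu>" "snd w \<in> fsupp \<nu>" using fsupp_couplings[OF \<gamma>] by auto
    then show "m powr p * of_bool (fst w \<noteq> snd w) \<le> c (fst w) (snd w) powr p"
      using assms(2-4) sep by (auto intro: powr_mono2)
  qed
  finally show "m powr p * \<bar>\<mu> x - \<nu> x\<bar> \<le> r" .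
qed

section \<open>The Wasserstein metric\<close>

lemma wasserstein_le_powr:
  assumes "couplings \<mu> \<nu> \<noteq> {}" "0 \<le> p" "optimal_cost p c \<mu> \<nu> \<le> A"
  shows "wasserstein p c \<mu> \<nu> \<le> A powr (1 / p)"
  using assms by (simp add: wasserstein_eq_optimal_cost powr_mono2 optimal_cost_nonneg)

lemma wasserstein_le_cost:
  "\<gamma> \<in> couplings \<mu> \<nu> \<Longrightarrow> 0 \<le> p \<Longrightarrow> wasserstein p c \<mu> \<nu> \<le> transport_cost p c \<gamma> powr (1 / p)"
  using wasserstein_le_powr optimal_cost_le by blast

lemma wasserstein_approx:
  assumes "couplings \<mu> \<nu> \<noteq> {}" "0 < p" "0 < \<epsilon>"
  shows "\<exists>\<gamma>\<in>couplings \<mu> \<nu>. transport_cost p c \<gamma> powr (1 / p) < wasserstein p c \<mu> \<nu> + \<epsilon>"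
proof -
  define r where "r = wasserstein p c \<mu> \<nu> + \<epsilon>"
  have "0 \<le> optimal_cost p c \<mu> \<nu>" using assms(1) by (rule optimal_cost_nonneg)
  then have "optimal_cost p c \<mu> \<nu> = wasserstein p c \<mu> \<nu> powr p"
    using assms(2) by (simp add: wasserstein_eq_optimal_cost powr_powr)
  also have "\<dots> < r powr p"
    using assms(2,3) by (simp add: r_def powr_less_mono2 wasserstein_eq_optimal_cost)
  finally obtain \<gamma> where \<gamma>: "\<gamma> \<in> couplings \<mu> \<nu>" "transport_cost p c \<gamma> < r powr p"
    using optimal_cost_approx[OF assms(1)] by blast
  then have "transport_cost p c \<gamma> powr (1 / p) < (r powr p) powr (1 / p)"
    using assms(2) by (intro powr_less_mono2) (auto intro: transport_cost_nonneg)
  also have "\<dots> = r"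
    using assms by (simp add: r_def powr_powr wasserstein_eq_optimal_cost add_nonneg_pos)
  finally show ?thesis using \<gamma>(1) unfolding r_def by blast
qed

lemma wasserstein_commute:
  assumes "\<And>x y. c x y = c y x"
  shows "wasserstein p c \<mu> \<nu> = wasserstein p c \<nu> \<mu>"
proof -
  have "optimal_cost p c \<mu> \<nu> = optimal_cost p c \<nu> \<mu>" by (rule optimal_cost_commute) (rule assms)
  then show ?thesis by (simp add: wasserstein_eq_optimal_cost)
qed

lemma max_powr:
  fixes a b q :: real
  assumes "0 \<le> a" "0 \<le> b" "0 \<le> q"
  shows "max a b powr q = max (a powr q) (b powr q)"
proof (cases "a \<le> b")
  case False
  then have "b powr q \<le> a powr q" using assms by (intro powr_mono2) auto
  then show ?thesis using False by (auto simp: max_def)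
qed (use assms in \<open>auto simp: max_def powr_mono2\<close>)

lemma wasserstein_pushforward_le:
  assumes "couplings \<mu> \<nu> \<noteq> {}" "0 < p" "\<And>x y. 0 \<le> c x y" "\<And>x y. c (f x) (f y) \<le> D x y"
  shows "wasserstein p c (pushforward f \<mu>) (pushforward f \<nu>) \<le> wasserstein p D \<mu> \<nu>"
  unfolding wasserstein_eq_optimal_cost[of p D]
  using assms couplings_pushforward[of _ \<mu> \<nu> f f]
  by (intro wasserstein_le_powr optimal_cost_pushforward_le) auto

lemma wasserstein_mass_prod_le:
  assumes "prob_mass \<mu>" "prob_mass \<mu>'" "prob_mass \<nu>" "prob_mass \<nu>'" "0 < p"
    and "\<And>x y. 0 \<le> d x y" "\<And>x y. 0 \<le> e x y"
  shows "wasserstein p (max_dist d e) (mass_prod \<mu> \<nu>) (mass_prod \<mu>' \<nu>')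
    \<le> 2 powr (1 / p) * max (wasserstein p d \<mu> \<mu>') (wasserstein p e \<nu> \<nu>')"
proof -
  have nn: "0 \<le> optimal_cost p d \<mu> \<mu>'" "0 \<le> optimal_cost p e \<nu> \<nu>'"
    using assms by (simp_all add: optimal_cost_nonneg couplings_nonempty)
  have "optimal_cost p (max_dist d e) (mass_prod \<mu> \<nu>) (mass_prod \<mu>' \<nu>') \<le> optimal_cost p d \<mu> \<mu>' + optimal_cost p e \<nu> \<nu>'"
    by (rule optimal_cost_mass_prod_le) (use assms in auto)
  then have "optimal_cost p (max_dist d e) (mass_prod \<mu> \<nu>) (mass_prod \<mu>' \<nu>') \<le> 2 * max (optimal_cost p d \<mu> \<mu>') (optimal_cost p e \<nu> \<nu>')"
    by linarith
  then have "wasserstein p (max_dist d e) (mass_prod \<mu> \<nu>) (mass_prod \<mu>' \<nu>')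
      \<le> (2 * max (optimal_cost p d \<mu> \<mu>') (optimal_cost p e \<nu> \<nu>')) powr (1 / p)"
    using assms by (intro wasserstein_le_powr) (auto simp: couplings_nonempty prob_mass_mass_prod)
  also have "\<dots> = 2 powr (1 / p) * max (wasserstein p d \<mu> \<mu>') (wasserstein p e \<nu> \<nu>')"
    using nn assms(5) by (simp add: powr_mult max_powr wasserstein_eq_optimal_cost)
  finally show ?thesis .
qed

lemma wasserstein_mix_le:
  assumes "prob_mass \<alpha>" "prob_mass \<alpha>'" "prob_mass \<beta>" "prob_mass \<beta>'" "0 \<le> t" "t \<le> 1" "0 < p"
  shows "wasserstein p c (\<lambda>x. t * \<alpha> x + (1 - t) * \<beta> x) (\<lambda>x. t * \<alpha>' x + (1 - t) * \<beta>' x)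
    \<le> max (wasserstein p c \<alpha> \<alpha>') (wasserstein p c \<beta> \<beta>')"
proof -
  have nn: "0 \<le> optimal_cost p c \<alpha> \<alpha>'" "0 \<le> optimal_cost p c \<beta> \<beta>'"
    using assms by (simp_all add: optimal_cost_nonneg couplings_nonempty)
  have "t * optimal_cost p c \<alpha> \<alpha>' + (1 - t) * optimal_cost p c \<beta> \<beta>'
      \<le> t * max (optimal_cost p c \<alpha> \<alpha>') (optimal_cost p c \<beta> \<beta>') + (1 - t) * max (optimal_cost p c \<alpha> \<alpha>') (optimal_cost p c \<beta> \<beta>')"
    using assms(5,6) by (intro add_mono mult_left_mono) auto
  then have "t * optimal_cost p c \<alpha> \<alpha>' + (1 - t) * optimal_cost p c \<beta> \<beta>' \<le> max (optimal_cost p c \<alpha> \<alpha>') (optimal_cost p c \<beta> \<beta>')"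
    by (simp add: algebra_simps)
  then have "wasserstein p c (\<lambda>x. t * \<alpha> x + (1 - t) * \<beta> x) (\<lambda>x. t * \<alpha>' x + (1 - t) * \<beta>' x)
      \<le> max (optimal_cost p c \<alpha> \<alpha>') (optimal_cost p c \<beta> \<beta>') powr (1 / p)"
    using assms optimal_cost_mix_le[of \<alpha> \<alpha>' \<beta> \<beta>' t p c]
    by (intro wasserstein_le_powr) (auto simp: couplings_nonempty prob_mass_mix)
  also have "\<dots> = max (wasserstein p c \<alpha> \<alpha>') (wasserstein p c \<beta> \<beta>')"
    using nn assms(7) by (simp add: max_powr wasserstein_eq_optimal_cost)
  finally show ?thesis .
qed

lemma wasserstein_mix_shift_le:
  assumes "prob_mass \<alpha>" "prob_mass \<beta>" "\<And>x. x \<in> fsupp \<alpha> \<union> fsupp \<beta> \<Longrightarrow> c x x = 0"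
    and "\<And>x y. c x y = c y x"
    and "s \<in> {0..1}" "t \<in> {0..1}" "0 < p"
  shows "wasserstein p c (\<lambda>x. t * \<alpha> x + (1 - t) * \<beta> x) (\<lambda>x. s * \<alpha> x + (1 - s) * \<beta> x)
    \<le> \<bar>t - s\<bar> powr (1 / p) * wasserstein p c \<alpha> \<beta>"
proof -
  have fm: "finite_mass \<alpha>" "finite_mass \<beta>" and ne: "couplings \<alpha> \<beta> \<noteq> {}"
    using assms(1,2) by (simp_all add: prob_mass_def couplings_nonempty)
  have *: "wasserstein p c (\<lambda>x. t * \<alpha> x + (1 - t) * \<beta> x) (\<lambda>x. s * \<alpha> x + (1 - s) * \<beta> x)
      \<le> (t - s) powr (1 / p) * wasserstein p c \<alpha> \<beta>"
    if st: "0 \<le> s" "s \<le> t" "t \<le> 1" for s t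
  proof -
    have "optimal_cost p c (\<lambda>x. t * \<alpha> x + (1 - t) * \<beta> x) (\<lambda>x. s * \<alpha> x + (1 - s) * \<beta> x)
        \<le> (t - s) * optimal_cost p c \<alpha> \<beta>"
      by (rule optimal_cost_mix_shift_le[OF fm ne assms(3) st])
    moreover have "couplings (\<lambda>x. t * \<alpha> x + (1 - t) * \<beta> x) (\<lambda>x. s * \<alpha> x + (1 - s) * \<beta> x) \<noteq> {}"
      using st by (intro couplings_nonempty prob_mass_mix assms(1,2)) auto
    ultimately have "wasserstein p c (\<lambda>x. t * \<alpha> x + (1 - t) * \<beta> x) (\<lambda>x. s * \<alpha> x + (1 - s) * \<beta> x)
        \<le> ((t - s) * optimal_cost p c \<alpha> \<beta>) powr (1 / p)"
      using assms(7) by (intro wasserstein_le_powr) auto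
    also have "\<dots> = (t - s) powr (1 / p) * wasserstein p c \<alpha> \<beta>"
      using st optimal_cost_nonneg[OF ne] by (simp add: powr_mult wasserstein_eq_optimal_cost)
    finally show ?thesis .
  qed
  show ?thesis
  proof (cases "s \<le> t")
    case True
    then show ?thesis using *[of s t] assms(5,6) by simp
  next
    case False
    have "wasserstein p c (\<lambda>x. t * \<alpha> x + (1 - t) * \<beta> x) (\<lambda>x. s * \<alpha> x + (1 - s) * \<beta> x)
        = wasserstein p c (\<lambda>x. s * \<alpha> x + (1 - s) * \<beta> x) (\<lambda>x. t * \<alpha> x + (1 - t) * \<beta> x)"
      by (rule wasserstein_commute) (rule assms(4))
    then show ?thesis using *[of t s] False assms(5,6) by (simp add: abs_minus_commute)
  qed
qed

lemma convex_powr_nonneg: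
  fixes u v s t p :: real
  assumes "0 \<le> u" "0 \<le> v" "0 \<le> s" "0 \<le> t" "s + t = 1" "1 \<le> p"
  shows "(s * u + t * v) powr p \<le> s * u powr p + t * v powr p"
proof -
  have scale: "(r * w) powr p \<le> r * w powr p" if "0 \<le> r" "r \<le> 1" "0 \<le> w" for r w :: real
  proof -
    have "r powr p \<le> r powr 1" using that assms(6) by (intro powr_mono') auto
    then have "r powr p \<le> r" using that(1) by simp
    then show ?thesis using that by (simp add: powr_mult mult_right_mono)
  qed
  have s: "s = 1 - t" using assms(5) by simp
  consider "u = 0" | "v = 0" | "u \<in> {0<..}" "v \<in> {0<..}" using assms(1,2) by fastforce
  then show ?thesis
  proof cases
    case 1
    then show ?thesis using scale[of t v] assms by simp
  next
    case 2
    then show ?thesis using scale[of s u] assms by simp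
  next
    case 3
    from convex_onD[OF powr_convex[OF assms(6)] _ _ 3, of t] show ?thesis using assms(3-5) by (simp add: s)
  qed
qed

lemma powr_add_le_split:
  fixes a b A B p :: real
  assumes "0 \<le> a" "0 \<le> b" "0 < A" "0 < B" "1 \<le> p"
  shows "(a + b) powr p \<le> (A + B) powr p * (A / (A + B) * (a / A) powr p + B / (A + B) * (b / B) powr p)"
proof -
  have "A / (A + B) * (a / A) = a / (A + B)" "B / (A + B) * (b / B) = b / (A + B)"
    using assms(3,4) by simp_all
  then have "a + b = (A + B) * (A / (A + B) * (a / A) + B / (A + B) * (b / B))"
    using assms(3,4) by (simp add: add_divide_distrib[symmetric])
  then have "(a + b) powr p = (A + B) powr p * (A / (A + B) * (a / A) + B / (A + B) * (b / B)) powr p"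
    using assms by (simp add: powr_mult)
  also have "\<dots> \<le> (A + B) powr p * (A / (A + B) * (a / A) powr p + B / (A + B) * (b / B) powr p)"
    using assms by (intro mult_left_mono convex_powr_nonneg) (auto simp: add_divide_distrib[symmetric])
  finally show ?thesis .
qed

lemma mass_integral_powr_add_vanishing:
  assumes "finite_mass \<pi>" "mass_integral (\<lambda>x. a x powr p) \<pi> = 0"
  shows "mass_integral (\<lambda>x. (a x + b x) powr p) \<pi> = mass_integral (\<lambda>x. b x powr p) \<pi>"
proof -
  have "\<forall>x\<in>fsupp \<pi>. a x powr p * \<pi> x = 0"
    using assms by (subst sum_nonneg_eq_0_iff[symmetric]) (auto simp: mass_integral_def finite_mass_def)
  then show ?thesis unfolding mass_integral_def by (intro sum.cong) (auto simp: fsupp_def)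
qed

lemma mass_integral_Minkowski:
  assumes "finite_mass \<pi>" "1 \<le> p" "\<And>x. 0 \<le> a x" "\<And>x. 0 \<le> b x"
  shows "mass_integral (\<lambda>x. (a x + b x) powr p) \<pi> powr (1 / p)
    \<le> mass_integral (\<lambda>x. a x powr p) \<pi> powr (1 / p) + mass_integral (\<lambda>x. b x powr p) \<pi> powr (1 / p)"
proof -
  define SA where "SA = mass_integral (\<lambda>x. a x powr p) \<pi>"
  define SB where "SB = mass_integral (\<lambda>x. b x powr p) \<pi>"
  have nn: "\<And>x. 0 \<le> \<pi> x" using assms(1) by (simp add: finite_mass_def)
  have "0 \<le> SA" "0 \<le> SB" unfolding SA_def SB_def using nn by (auto intro: mass_integral_nonneg)
  then consider "SA = 0" | "SB = 0" | "0 < SA" "0 < SB" by linarith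
  then show ?thesis
  proof cases
    case 1
    then show ?thesis
      using mass_integral_powr_add_vanishing[OF assms(1) 1[unfolded SA_def], of b] by (simp add: SA_def SB_def)
  next
    case 2
    then show ?thesis
      using mass_integral_powr_add_vanishing[OF assms(1) 2[unfolded SB_def], of a]
      by (simp add: SA_def SB_def add.commute)
  next
    case 3
    define A where "A = SA powr (1 / p)"
    define B where "B = SB powr (1 / p)"
    have AB: "0 < A" "0 < B" "A powr p = SA" "B powr p = SB"
      using 3 assms(2) by (auto simp: A_def B_def powr_powr)
    have "(a x + b x) powr p \<le> (A + B) powr p * (A / (A + B) / SA * a x powr p + B / (A + B) / SB * b x powr p)" for x
      using powr_add_le_split[OF assms(3,4) AB(1,2) assms(2), of x x] AB assms(3,4) by (simp add: powr_divide)
    then have "mass_integral (\<lambda>x. (a x + b x) powr p) \<pi>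
        \<le> mass_integral (\<lambda>x. (A + B) powr p * (A / (A + B) / SA * a x powr p + B / (A + B) / SB * b x powr p)) \<pi>"
      using nn by (intro mass_integral_mono) auto
    also have "\<dots> = (A + B) powr p"
      unfolding mass_integral_cmult mass_integral_add SA_def[symmetric] SB_def[symmetric]
      using 3 AB(1,2) by (simp add: add_divide_distrib[symmetric])
    finally have "mass_integral (\<lambda>x. (a x + b x) powr p) \<pi> powr (1 / p) \<le> ((A + B) powr p) powr (1 / p)"
      using assms(2) nn by (intro powr_mono2) (auto intro: mass_integral_nonneg)
    also have "\<dots> = A + B" using AB assms(2) by (simp add: powr_powr)
    finally show ?thesis by (simp add: A_def B_def SA_def SB_def)
  qed
qed

text \<open>Where \<open>\<beta> y = 0\<close> also \<open>\<gamma>1 (x, y) = 0\<close>, so the convention \<open>x / 0 = 0\<close> gives the right value.\<close>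

definition glue :: "('a \<Rightarrow> real) \<Rightarrow> ('a \<times> 'a \<Rightarrow> real) \<Rightarrow> ('a \<times> 'a \<Rightarrow> real) \<Rightarrow> 'a \<times> 'a \<times> 'a \<Rightarrow> real" where
  "glue \<beta> \<gamma>1 \<gamma>2 w = \<gamma>1 (fst w, fst (snd w)) * \<gamma>2 (snd w) / \<beta> (fst (snd w))"

lemma finite_mass_glue:
  assumes \<gamma>1: "\<gamma>1 \<in> couplings \<alpha> \<beta>" and \<gamma>2: "\<gamma>2 \<in> couplings \<beta> \<zeta>"
  shows "finite_mass (glue \<beta> \<gamma>1 \<gamma>2)" and "fsupp (glue \<beta> \<gamma>1 \<gamma>2) \<subseteq> fsupp \<alpha> \<times> fsupp \<beta> \<times> fsupp \<zeta>"
proof -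
  have m: "finite_mass \<gamma>1" "finite_mass \<gamma>2" "pushforward fst \<gamma>2 = \<beta>"
    using \<gamma>1 \<gamma>2 by (auto simp: couplings_iff)
  have fin: "finite (fsupp \<alpha>)" "finite (fsupp \<beta>)" "finite (fsupp \<zeta>)"
    using \<gamma>1 \<gamma>2 finite_fsupp_pushforward by (metis couplings_iff finite_mass_finite)+
  show sG: "fsupp (glue \<beta> \<gamma>1 \<gamma>2) \<subseteq> fsupp \<alpha> \<times> fsupp \<beta> \<times> fsupp \<zeta>"
    using fsupp_couplings[OF \<gamma>1] fsupp_couplings[OF \<gamma>2] by (force simp: fsupp_def glue_def)
  have "0 \<le> \<gamma>1 z" "0 \<le> \<gamma>2 z" "0 \<le> \<beta> y" for z y
    using m(1,2) finite_mass_pushforward[OF m(2), of fst] unfolding finite_mass_def m(3) by blast+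
  then show "finite_mass (glue \<beta> \<gamma>1 \<gamma>2)"
    using finite_subset[OF sG] fin by (auto simp: finite_mass_def glue_def)
qed

lemma glue_marginals:
  assumes \<gamma>1: "\<gamma>1 \<in> couplings \<alpha> \<beta>" and \<gamma>2: "\<gamma>2 \<in> couplings \<beta> \<zeta>"
  shows "pushforward (\<lambda>w. (fst w, fst (snd w))) (glue \<beta> \<gamma>1 \<gamma>2) = \<gamma>1"
    and "pushforward snd (glue \<beta> \<gamma>1 \<gamma>2) = \<gamma>2"
proof -
  let ?A = "fsupp \<alpha>" and ?B = "fsupp \<beta>" and ?C = "fsupp \<zeta>" and ?G = "glue \<beta> \<gamma>1 \<gamma>2"
  have m: "pushforward snd \<gamma>1 = \<beta>" "pushforward fst \<gamma>2 = \<beta>" using \<gamma>1 \<gamma>2 by (auto simp: couplings_iff)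
  have fin: "finite ?A" "finite ?C"
    using \<gamma>1 \<gamma>2 finite_fsupp_pushforward by (metis couplings_iff finite_mass_finite)+
  have s1: "fsupp \<gamma>1 \<subseteq> ?A \<times> ?B" and s2: "fsupp \<gamma>2 \<subseteq> ?B \<times> ?C"
    using fsupp_couplings[OF \<gamma>1] fsupp_couplings[OF \<gamma>2] .
  note sG = finite_mass_glue(2)[OF \<gamma>1 \<gamma>2]
  have "\<beta> y = (\<Sum>z\<in>?C. \<gamma>2 (y, z))" for y
    using s2 fin unfolding m(2)[symmetric] by (intro pushforward_eq_sum) (force simp: inj_on_def)+
  moreover have "\<beta> y = (\<Sum>x\<in>?A. \<gamma>1 (x, y))" for y
    using s1 fin unfolding m(1)[symmetric] by (intro pushforward_eq_sum) (force simp: inj_on_def)+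
  moreover have "\<gamma>1 (x, y) = 0" "\<gamma>2 (y, z) = 0" if "\<beta> y = 0" for x y z
    using that s1 s2 by (auto simp: fsupp_def)
  ultimately have cancel: "\<gamma>1 (x, y) / \<beta> y * (\<Sum>z\<in>?C. \<gamma>2 (y, z)) = \<gamma>1 (x, y)"
    "\<gamma>2 (y, z) / \<beta> y * (\<Sum>x\<in>?A. \<gamma>1 (x, y)) = \<gamma>2 (y, z)" for x y z
    by (metis nonzero_divide_eq_eq mult.commute mult_zero_left)+
  show "pushforward (\<lambda>w. (fst w, fst (snd w))) ?G = \<gamma>1"
  proof
    fix u :: "'a \<times> 'a"
    have "pushforward (\<lambda>w. (fst w, fst (snd w))) ?G u = (\<Sum>z\<in>?C. ?G (fst u, snd u, z))"
      using sG fin by (intro pushforward_eq_sum) (force simp: inj_on_def)+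
    then show "pushforward (\<lambda>w. (fst w, fst (snd w))) ?G u = \<gamma>1 u"
      using cancel(1)[of "fst u" "snd u"] by (simp add: glue_def sum_distrib_left)
  qed
  show "pushforward snd ?G = \<gamma>2"
  proof
    fix u :: "'a \<times> 'a"
    have "pushforward snd ?G u = (\<Sum>x\<in>?A. ?G (x, u))"
      using sG fin by (intro pushforward_eq_sum) (force simp: inj_on_def)+
    then show "pushforward snd ?G u = \<gamma>2 u"
      using cancel(2)[of "fst u" "snd u"] by (simp add: glue_def sum_distrib_left mult.commute)
  qed
qed

definition prob_masses :: "'a set \<Rightarrow> ('a \<Rightarrow> real) set" where
  "prob_masses X = {\<mu>. prob_mass \<mu> \<and> fsupp \<mu> \<subseteq> X}"

definition glued_coupling :: "('a \<Rightarrow> real) \<Rightarrow> ('a \<times> 'a \<Rightarrow> real) \<Rightarrow> ('a \<times> 'a \<Rightarrow> real) \<Rightarrow> 'a \<times> 'a \<Rightarrow> real" where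
  "glued_coupling \<beta> \<gamma>1 \<gamma>2 = pushforward (\<lambda>w. (fst w, snd (snd w))) (glue \<beta> \<gamma>1 \<gamma>2)"

lemma glued_coupling_triangle:
  assumes \<gamma>1: "\<gamma>1 \<in> couplings \<alpha> \<beta>" and \<gamma>2: "\<gamma>2 \<in> couplings \<beta> \<zeta>"
    and p: "1 \<le> p" and nn: "\<And>x y. 0 \<le> c x y"
    and tri: "\<And>x y z. x \<in> fsupp \<alpha> \<Longrightarrow> y \<in> fsupp \<beta> \<Longrightarrow> z \<in> fsupp \<zeta> \<Longrightarrow> c x z \<le> c x y + c y z"
  shows "glued_coupling \<beta> \<gamma>1 \<gamma>2 \<in> couplings \<alpha> \<zeta>"
    and "transport_cost p c (glued_coupling \<beta> \<gamma>1 \<gamma>2) powr (1 / p)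
      \<le> transport_cost p c \<gamma>1 powr (1 / p) + transport_cost p c \<gamma>2 powr (1 / p)"
proof -
  let ?\<gamma> = "glued_coupling \<beta> \<gamma>1 \<gamma>2"
  define G where "G = glue \<beta> \<gamma>1 \<gamma>2"
  note G = finite_mass_glue(1)[OF \<gamma>1 \<gamma>2, folded G_def] glue_marginals[OF \<gamma>1 \<gamma>2, folded G_def]
  have finG: "finite (fsupp G)" using G(1) by (rule finite_mass_finite)
  have "pushforward fst ?\<gamma> = pushforward fst (pushforward (\<lambda>w. (fst w, fst (snd w))) G)"
    "pushforward snd ?\<gamma> = pushforward snd (pushforward snd G)"
    using finG by (simp_all add: G_def glued_coupling_def pushforward_comp)
  then show "?\<gamma> \<in> couplings \<alpha> \<zeta>"
    using G \<gamma>1 \<gamma>2 by (simp add: couplings_iff finite_mass_pushforward G_def glued_coupling_def)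
  have cost1: "transport_cost p c \<gamma>1 = mass_integral (\<lambda>w. c (fst w) (fst (snd w)) powr p) G"
    using finG by (simp add: G(2)[symmetric] transport_cost_def mass_integral_pushforward)
  have cost2: "transport_cost p c \<gamma>2 = mass_integral (\<lambda>w. c (fst (snd w)) (snd (snd w)) powr p) G"
    using finG by (simp add: G(3)[symmetric] transport_cost_def mass_integral_pushforward)
  have "c (fst w) (snd (snd w)) \<le> c (fst w) (fst (snd w)) + c (fst (snd w)) (snd (snd w))"
    if "w \<in> fsupp G" for w
  proof -
    have "(fst w, fst (snd w)) \<in> fsupp \<gamma>1" "snd w \<in> fsupp \<gamma>2"
      using that fsupp_pushforward_eq[OF G(1), of "\<lambda>w. (fst w, fst (snd w))"]
        fsupp_pushforward_eq[OF G(1), of snd] G(2,3) by auto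
    then show ?thesis
      using fsupp_couplings[OF \<gamma>1] fsupp_couplings[OF \<gamma>2] by (intro tri) (auto simp: mem_Times_iff)
  qed
  then have "transport_cost p c ?\<gamma> powr (1 / p)
      \<le> mass_integral (\<lambda>w. (c (fst w) (fst (snd w)) + c (fst (snd w)) (snd (snd w))) powr p) G powr (1 / p)"
    using finG G(1) p nn unfolding glued_coupling_def G_def[symmetric]
    by (auto simp: transport_cost_def mass_integral_pushforward finite_mass_def
        intro!: powr_mono2 mass_integral_mono mass_integral_nonneg)
  also have "\<dots> \<le> transport_cost p c \<gamma>1 powr (1 / p) + transport_cost p c \<gamma>2 powr (1 / p)"
    unfolding cost1 cost2 using G(1) p nn by (intro mass_integral_Minkowski) auto
  finally show "transport_cost p c ?\<gamma> powr (1 / p) \<le> transport_cost p c \<gamma>1 powr (1 / p) + transport_cost p c \<gamma>2 powr (1 / p)" .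
qed

lemma wasserstein_triangle:
  assumes X: "Metric_space X c" and p: "1 \<le> p"
    and \<mu>: "\<mu> \<in> prob_masses X" and \<nu>: "\<nu> \<in> prob_masses X" and \<zeta>: "\<zeta> \<in> prob_masses X"
  shows "wasserstein p c \<mu> \<zeta> \<le> wasserstein p c \<mu> \<nu> + wasserstein p c \<nu> \<zeta>"
proof (rule field_le_epsilon)
  fix \<epsilon> :: real assume "0 < \<epsilon>"
  have pm: "prob_mass \<mu>" "prob_mass \<nu>" "prob_mass \<zeta>" using \<mu> \<nu> \<zeta> by (auto simp: prob_masses_def)
  obtain \<gamma>1 where \<gamma>1: "\<gamma>1 \<in> couplings \<mu> \<nu>"
    "transport_cost p c \<gamma>1 powr (1 / p) < wasserstein p c \<mu> \<nu> + \<epsilon> / 2"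
    using wasserstein_approx[OF couplings_nonempty[OF pm(1,2)], of p "\<epsilon> / 2"] p \<open>0 < \<epsilon>\<close> by auto
  obtain \<gamma>2 where \<gamma>2: "\<gamma>2 \<in> couplings \<nu> \<zeta>"
    "transport_cost p c \<gamma>2 powr (1 / p) < wasserstein p c \<nu> \<zeta> + \<epsilon> / 2"
    using wasserstein_approx[OF couplings_nonempty[OF pm(2,3)], of p "\<epsilon> / 2"] p \<open>0 < \<epsilon>\<close> by auto
  have "x \<in> fsupp \<mu> \<Longrightarrow> y \<in> fsupp \<nu> \<Longrightarrow> z \<in> fsupp \<zeta> \<Longrightarrow> c x z \<le> c x y + c y z" for x y z
    using \<mu> \<nu> \<zeta> by (intro Metric_space.triangle[OF X]) (auto simp: prob_masses_def)
  note glued = glued_coupling_triangle[OF \<gamma>1(1) \<gamma>2(1) p Metric_space.nonneg[OF X] this]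
  have "wasserstein p c \<mu> \<zeta> \<le> transport_cost p c (glued_coupling \<nu> \<gamma>1 \<gamma>2) powr (1 / p)"
    using glued(1) p by (intro wasserstein_le_cost) auto
  also have "\<dots> \<le> transport_cost p c \<gamma>1 powr (1 / p) + transport_cost p c \<gamma>2 powr (1 / p)"
    by (rule glued(2))
  also have "\<dots> \<le> wasserstein p c \<mu> \<nu> + wasserstein p c \<nu> \<zeta> + \<epsilon>"
    using \<gamma>1(2) \<gamma>2(2) by simp
  finally show "wasserstein p c \<mu> \<zeta> \<le> wasserstein p c \<mu> \<nu> + wasserstein p c \<nu> \<zeta> + \<epsilon>" .
qed

lemma finite_subset_separated:
  assumes X: "Metric_space X c" and "finite S" "S \<subseteq> X"
  obtains m where "0 < m" "\<And>x y. x \<in> S \<Longrightarrow> y \<in> S \<Longrightarrow> x \<noteq> y \<Longrightarrow> m \<le> c x y"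
proof
  define D where "D = insert 1 {c x y | x y. x \<in> S \<and> y \<in> S \<and> x \<noteq> y}"
  have "{c x y | x y. x \<in> S \<and> y \<in> S \<and> x \<noteq> y} \<subseteq> (\<lambda>(x, y). c x y) ` (S \<times> S)" by auto
  then have "finite {c x y | x y. x \<in> S \<and> y \<in> S \<and> x \<noteq> y}"
    by (rule finite_subset) (simp add: assms(2))
  then have fin: "finite D" by (simp add: D_def)
  have pos: "0 < r" if r: "r \<in> D" for r
  proof -
    consider "r = 1" | x y where "x \<in> S" "y \<in> S" "x \<noteq> y" "r = c x y"
      using r by (auto simp: D_def)
    then show ?thesis
    proof cases
      case (2 x y)
      then have "c x y \<noteq> 0" using Metric_space.zero[OF X, of x y] assms(3) by auto
      with Metric_space.nonneg[OF X, of x y] 2 show ?thesis by linarith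
    qed simp
  qed
  show "0 < Min D" using fin pos by (simp add: D_def)
  show "Min D \<le> c x y" if "x \<in> S" "y \<in> S" "x \<noteq> y" for x y
  proof (rule Min_le[OF fin])
    show "c x y \<in> D" unfolding D_def using that by blast
  qed
qed

lemma Metric_space_wasserstein:
  assumes X: "Metric_space X c" and p: "1 \<le> p"
  shows "Metric_space (prob_masses X) (wasserstein p c)"
proof
  fix \<mu> \<nu> \<zeta>
  show "0 \<le> wasserstein p c \<mu> \<nu>" by (simp add: wasserstein_eq_optimal_cost)
  show "wasserstein p c \<mu> \<nu> = wasserstein p c \<nu> \<mu>"
    by (rule wasserstein_commute) (rule Metric_space.commute[OF X])
  show "wasserstein p c \<mu> \<zeta> \<le> wasserstein p c \<mu> \<nu> + wasserstein p c \<nu> \<zeta>"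
    if "\<mu> \<in> prob_masses X" "\<nu> \<in> prob_masses X" "\<zeta> \<in> prob_masses X"
    using wasserstein_triangle[OF X p that] .
  assume \<mu>: "\<mu> \<in> prob_masses X" and \<nu>: "\<nu> \<in> prob_masses X"
  then have pm: "prob_mass \<mu>" "prob_mass \<nu>" and S: "finite (fsupp \<mu> \<union> fsupp \<nu>)" "fsupp \<mu> \<union> fsupp \<nu> \<subseteq> X"
    by (auto simp: prob_masses_def prob_mass_def finite_mass_def)
  show "wasserstein p c \<mu> \<nu> = 0 \<longleftrightarrow> \<mu> = \<nu>"
  proof
    assume "\<mu> = \<nu>"
    then show "wasserstein p c \<mu> \<nu> = 0"
      using pm S optimal_cost_self[of \<nu> c p] Metric_space.zero[OF X]
      by (auto simp: wasserstein_eq_optimal_cost prob_mass_def)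
  next
    assume W: "wasserstein p c \<mu> \<nu> = 0"
    obtain m where m: "0 < m" "\<And>x y. x \<in> fsupp \<mu> \<union> fsupp \<nu> \<Longrightarrow> y \<in> fsupp \<mu> \<union> fsupp \<nu> \<Longrightarrow> x \<noteq> y \<Longrightarrow> m \<le> c x y"
      using finite_subset_separated[OF X S] by blast
    have "m powr p * \<bar>\<mu> x - \<nu> x\<bar> \<le> optimal_cost p c \<mu> \<nu>" for x
      using m p by (intro optimal_cost_ge_separation couplings_nonempty pm) (auto simp: Metric_space.nonneg[OF X])
    moreover have "optimal_cost p c \<mu> \<nu> = 0" using W by (simp add: wasserstein_eq_optimal_cost)
    ultimately have "m powr p * \<bar>\<mu> x - \<nu> x\<bar> \<le> 0" for x by simp
    then show "\<mu> = \<nu>" using m(1) by (auto simp: fun_eq_iff mult_le_0_iff)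
  qed
qed

lemma Metric_space_max_dist:
  assumes "Metric_space X d" "Metric_space Y e"
  shows "Metric_space (X \<times> Y) (max_dist d e)"
proof
  interpret X: Metric_space X d by fact
  interpret Y: Metric_space Y e by fact
  fix u v w :: "'a \<times> 'b"
  show "0 \<le> max_dist d e u v" by (auto simp: max_dist_def case_prod_beta le_max_iff_disj)
  show "max_dist d e u v = max_dist d e v u" by (simp add: max_dist_def case_prod_beta X.commute Y.commute)
  show "max_dist d e u v = 0 \<longleftrightarrow> u = v" if "u \<in> X \<times> Y" "v \<in> X \<times> Y"
  proof -
    have "max (d (fst u) (fst v)) (e (snd u) (snd v)) = 0 \<longleftrightarrow> d (fst u) (fst v) = 0 \<and> e (snd u) (snd v) = 0"
      using X.nonneg[of "fst u" "fst v"] Y.nonneg[of "snd u" "snd v"] by linarith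
    then show ?thesis using that by (auto simp: max_dist_def case_prod_beta prod_eq_iff mem_Times_iff)
  qed
  show "max_dist d e u w \<le> max_dist d e u v + max_dist d e v w"
    if "u \<in> X \<times> Y" "v \<in> X \<times> Y" "w \<in> X \<times> Y"
    using that X.triangle[of "fst u" "fst v" "fst w"] Y.triangle[of "snd u" "snd v" "snd w"]
      X.nonneg Y.nonneg
    by (auto simp: max_dist_def case_prod_beta max_def mem_Times_iff)
qed

lemma wasserstein_mix_mix_le:
  assumes X: "Metric_space X c" and p: "1 \<le> p"
    and mem: "\<alpha> \<in> prob_masses X" "\<beta> \<in> prob_masses X" "\<alpha>' \<in> prob_masses X" "\<beta>' \<in> prob_masses X"
    and st: "s \<in> {0..1}" "t \<in> {0..1}"
  shows "wasserstein p c (\<lambda>x. t * \<alpha> x + (1 - t) * \<beta> x) (\<lambda>x. s * \<alpha>' x + (1 - s) * \<beta>' x)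
    \<le> \<bar>t - s\<bar> powr (1 / p) * wasserstein p c \<alpha> \<beta> + max (wasserstein p c \<alpha> \<alpha>') (wasserstein p c \<beta> \<beta>')"
proof -
  have pm: "prob_mass \<alpha>" "prob_mass \<beta>" "prob_mass \<alpha>'" "prob_mass \<beta>'"
    using mem by (auto simp: prob_masses_def)
  have mix: "(\<lambda>x. r * \<mu> x + (1 - r) * \<nu> x) \<in> prob_masses X"
    if "\<mu> \<in> prob_masses X" "\<nu> \<in> prob_masses X" "r \<in> {0..1}" for r \<mu> \<nu>
    using that prob_mass_mix[of \<mu> \<nu> r] fsupp_conic[of r \<mu> "1 - r" \<nu>] by (auto simp: prob_masses_def)
  have "wasserstein p c (\<lambda>x. t * \<alpha> x + (1 - t) * \<beta> x) (\<lambda>x. s * \<alpha>' x + (1 - s) * \<beta>' x)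
      \<le> wasserstein p c (\<lambda>x. t * \<alpha> x + (1 - t) * \<beta> x) (\<lambda>x. s * \<alpha> x + (1 - s) * \<beta> x)
        + wasserstein p c (\<lambda>x. s * \<alpha> x + (1 - s) * \<beta> x) (\<lambda>x. s * \<alpha>' x + (1 - s) * \<beta>' x)"
    using mem st by (intro wasserstein_triangle[OF X p] mix)
  also have "\<dots> \<le> \<bar>t - s\<bar> powr (1 / p) * wasserstein p c \<alpha> \<beta> + max (wasserstein p c \<alpha> \<alpha>') (wasserstein p c \<beta> \<beta>')"
    using pm st p Metric_space.commute[OF X] Metric_space.zero[OF X] mem
    by (intro add_mono wasserstein_mix_shift_le wasserstein_mix_le) (auto simp: prob_masses_def)
  finally show ?thesis .
qed

section \<open>Metric realizations of products\<close>

lemma realization_subset_prob_masses: "realization X K \<phi> \<subseteq> prob_masses X"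
  by (auto simp: realization_def prob_masses_def prob_mass_def finite_mass_def)

lemma prob_mass_realization: "\<mu> \<in> realization X K \<phi> \<Longrightarrow> prob_mass \<mu>"
  using realization_subset_prob_masses by (auto simp: prob_masses_def)

lemma Metric_space_realization:
  "Metric_space X c \<Longrightarrow> 1 \<le> p \<Longrightarrow> Metric_space (realization X K \<phi>) (wasserstein p c)"
  using Metric_space.subspace[OF Metric_space_wasserstein realization_subset_prob_masses] .

lemma mass_prod_in_realization:
  assumes "\<mu> \<in> realization X K \<phi>" "\<nu> \<in> realization Y L \<psi>"
  shows "mass_prod \<mu> \<nu> \<in> realization (X \<times> Y) (prod_sc K L) (\<lambda>(x, y). (\<phi> x, \<psi> y))"
proof -
  have pm: "prob_mass \<mu>" "prob_mass \<nu>" using assms realization_subset_prob_masses by (auto simp: prob_masses_def)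
  then have "fsupp \<mu> \<noteq> {}" "fsupp \<nu> \<noteq> {}" by (auto simp: prob_mass_def)
  moreover have "(\<lambda>(x, y). (\<phi> x, \<psi> y)) ` (fsupp \<mu> \<times> fsupp \<nu>) = \<phi> ` fsupp \<mu> \<times> \<psi> ` fsupp \<nu>" by auto
  ultimately show ?thesis
    using assms prob_mass_mass_prod[OF pm]
    by (auto simp: realization_def prod_sc_def fsupp_mass_prod prob_mass_def finite_mass_def mass_prod_def)
qed

lemma pushforward_fst_in_realization:
  assumes "\<pi> \<in> realization (X \<times> Y) (prod_sc K L) (\<lambda>(x, y). (\<phi> x, \<psi> y))"
  shows "pushforward fst \<pi> \<in> realization X K \<phi>"
proof -
  have pm: "prob_mass (pushforward fst \<pi>)" and fm: "finite_mass \<pi>"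
    using assms realization_subset_prob_masses prob_mass_pushforward by (fastforce simp: prob_masses_def prob_mass_def)+
  have "\<phi> ` fst ` fsupp \<pi> = fst ` (\<lambda>(x, y). (\<phi> x, \<psi> y)) ` fsupp \<pi>" by force
  then show ?thesis
    using assms pm fsupp_pushforward_eq[OF fm, of fst]
    by (auto simp: realization_def prod_sc_def prob_mass_def finite_mass_def)
qed

lemma pushforward_snd_in_realization:
  assumes "\<pi> \<in> realization (X \<times> Y) (prod_sc K L) (\<lambda>(x, y). (\<phi> x, \<psi> y))"
  shows "pushforward snd \<pi> \<in> realization Y L \<psi>"
proof -
  have pm: "prob_mass (pushforward snd \<pi>)" and fm: "finite_mass \<pi>"
    using assms realization_subset_prob_masses prob_mass_pushforward by (fastforce simp: prob_masses_def prob_mass_def)+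
  have "\<psi> ` snd ` fsupp \<pi> = snd ` (\<lambda>(x, y). (\<phi> x, \<psi> y)) ` fsupp \<pi>" by force
  then show ?thesis
    using assms pm fsupp_pushforward_eq[OF fm, of snd]
    by (auto simp: realization_def prod_sc_def prob_mass_def finite_mass_def)
qed

lemma prod_sc_downward_closed:
  assumes "is_simplicial_complex V K" "is_simplicial_complex W L"
    and "\<sigma> \<in> prod_sc K L" "\<tau> \<noteq> {}" "\<tau> \<subseteq> \<sigma>"
  shows "\<tau> \<in> prod_sc K L"
proof -
  have \<sigma>: "fst ` \<sigma> \<in> K" "snd ` \<sigma> \<in> L" "finite \<sigma>" using assms(3) by (auto simp: prod_sc_def)
  have "fst ` \<tau> \<in> K"
    using assms(1) \<sigma>(1) assms(4,5) unfolding is_simplicial_complex_def by (meson image_is_empty image_mono)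
  moreover have "snd ` \<tau> \<in> L"
    using assms(2) \<sigma>(2) assms(4,5) unfolding is_simplicial_complex_def by (meson image_is_empty image_mono)
  moreover have "finite \<tau>" by (rule finite_subset[OF assms(5) \<sigma>(3)])
  ultimately show ?thesis using assms(4) by (simp add: prod_sc_def)
qed

lemma realization_fsupp_subset:
  assumes "\<nu> \<in> realization X K \<phi>" "prob_mass \<mu>" "fsupp \<mu> \<subseteq> fsupp \<nu>"
    and "\<And>\<sigma> \<tau>. \<sigma> \<in> K \<Longrightarrow> \<tau> \<noteq> {} \<Longrightarrow> \<tau> \<subseteq> \<sigma> \<Longrightarrow> \<tau> \<in> K"
  shows "\<mu> \<in> realization X K \<phi>"
proof -
  have \<nu>: "fsupp \<nu> \<subseteq> X" "\<phi> ` fsupp \<nu> \<in> K" using assms(1) by (auto simp: realization_def)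
  have "fsupp \<mu> \<noteq> {}" using assms(2) by (auto simp: prob_mass_def)
  then have "\<phi> ` fsupp \<mu> \<in> K" using assms(3) by (intro assms(4)[OF \<nu>(2)]) auto
  then show ?thesis using assms(2,3) \<nu>(1) by (auto simp: realization_def prob_mass_def finite_mass_def)
qed

lemma mix_product_of_marginals_in_realization:
  assumes "is_simplicial_complex V K" "is_simplicial_complex W L"
    and \<pi>: "\<pi> \<in> realization (X \<times> Y) (prod_sc K L) (\<lambda>(x, y). (\<phi> x, \<psi> y))" and t: "t \<in> {0..1}"
  shows "(\<lambda>z. t * \<pi> z + (1 - t) * mass_prod (pushforward fst \<pi>) (pushforward snd \<pi>) z)
    \<in> realization (X \<times> Y) (prod_sc K L) (\<lambda>(x, y). (\<phi> x, \<psi> y))"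
proof (rule realization_fsupp_subset)
  let ?\<rho> = "mass_prod (pushforward fst \<pi>) (pushforward snd \<pi>)"
  show \<rho>: "?\<rho> \<in> realization (X \<times> Y) (prod_sc K L) (\<lambda>(x, y). (\<phi> x, \<psi> y))"
    using \<pi> by (intro mass_prod_in_realization pushforward_fst_in_realization pushforward_snd_in_realization)
  have fm: "finite_mass \<pi>"
    using \<pi> realization_subset_prob_masses by (auto simp: prob_masses_def prob_mass_def)
  then have "fsupp \<pi> \<subseteq> fsupp ?\<rho>"
    by (auto simp: fsupp_mass_prod fsupp_pushforward_eq mem_Times_iff intro: rev_image_eqI)
  then show "fsupp (\<lambda>z. t * \<pi> z + (1 - t) * ?\<rho> z) \<subseteq> fsupp ?\<rho>" by (auto simp: fsupp_def)
  show "prob_mass (\<lambda>z. t * \<pi> z + (1 - t) * ?\<rho> z)"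
    using \<pi> \<rho> t realization_subset_prob_masses by (intro prob_mass_mix) (auto simp: prob_masses_def)
qed (rule prod_sc_downward_closed[OF assms(1,2)])

lemma wasserstein_marginals_le:
  assumes "\<pi> \<in> prob_masses (X \<times> Y)" "\<pi>' \<in> prob_masses (X \<times> Y)" "1 \<le> p"
    and "Metric_space X d" "Metric_space Y e"
  shows "max_dist (wasserstein p d) (wasserstein p e)
      (pushforward fst \<pi>, pushforward snd \<pi>) (pushforward fst \<pi>', pushforward snd \<pi>')
    \<le> wasserstein p (max_dist d e) \<pi> \<pi>'"
proof -
  have ne: "couplings \<pi> \<pi>' \<noteq> {}" using assms(1,2) by (simp add: prob_masses_def couplings_nonempty)
  have "wasserstein p d (pushforward fst \<pi>) (pushforward fst \<pi>') \<le> wasserstein p (max_dist d e) \<pi> \<pi>'"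
    using assms Metric_space.nonneg[OF assms(4)]
    by (intro wasserstein_pushforward_le[OF ne]) (auto simp: max_dist_def case_prod_beta)
  moreover have "wasserstein p e (pushforward snd \<pi>) (pushforward snd \<pi>') \<le> wasserstein p (max_dist d e) \<pi> \<pi>'"
    using assms Metric_space.nonneg[OF assms(5)]
    by (intro wasserstein_pushforward_le[OF ne]) (auto simp: max_dist_def case_prod_beta)
  ultimately show ?thesis by (simp add: max_dist_def)
qed

lemma Lipschitz_imp_continuous_map_mtopology:
  assumes "Metric_space M d" "Metric_space M' d'" "f ` M \<subseteq> M'"
    and "\<And>x y. x \<in> M \<Longrightarrow> y \<in> M \<Longrightarrow> d' (f x) (f y) \<le> B * d x y"
  shows "continuous_map (Metric_space.mtopology M d) (Metric_space.mtopology M' d') f"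
  using Lipschitz_continuous_imp_continuous_map[of "metric (M, d)" "metric (M', d')" f] assms
  by (auto simp: Lipschitz_continuous_map_def mtopology_of_def Metric_space.mspace_metric Metric_space.mdist_metric)

lemma top_of_set_unit_interval: "top_of_set {0..1::real} = Metric_space.mtopology {0..1} dist"
proof -
  interpret Submetric UNIV dist "{0..1::real}"
    by (simp add: Submetric_def Submetric_axioms_def Met_TC.Metric_space_axioms)
  show ?thesis using mtopology_submetric by simp
qed

lemma Holder_Lipschitz_small:
  fixes C L q \<epsilon> :: real
  assumes "0 < \<epsilon>" "0 < q" "0 \<le> L"
  obtains \<delta> where "0 < \<delta>" "\<And>r u. 0 \<le> r \<Longrightarrow> r < \<delta> \<Longrightarrow> u < \<delta> \<Longrightarrow> r powr q * C + L * u < \<epsilon>"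
proof
  define \<eta> where "\<eta> = \<epsilon> / (2 * (\<bar>C\<bar> + 1))"
  define \<delta> where "\<delta> = min (\<eta> powr (1 / q)) (\<epsilon> / (2 * (L + 1)))"
  show \<delta>: "0 < \<delta>" using assms by (simp add: \<delta>_def \<eta>_def)
  fix r u :: real assume r: "0 \<le> r" "r < \<delta>" and u: "u < \<delta>"
  have "r powr q \<le> (\<eta> powr (1 / q)) powr q"
    using r assms(2) by (intro powr_mono2) (auto simp: \<delta>_def)
  also have "\<dots> = \<eta>" using assms(1,2) by (simp add: powr_powr \<eta>_def)
  finally have "r powr q * C \<le> \<eta> * \<bar>C\<bar>"
    using mult_left_mono[OF abs_ge_self[of C], of "r powr q"] mult_right_mono[of "r powr q" \<eta> "\<bar>C\<bar>"] by simp
  also have "\<dots> < \<epsilon> / 2" using assms(1) by (simp add: \<eta>_def field_simps)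
  finally have 1: "r powr q * C < \<epsilon> / 2" .
  have "L * u \<le> L * (\<epsilon> / (2 * (L + 1)))"
    using u assms(3) by (intro mult_left_mono) (auto simp: \<delta>_def)
  also have "\<dots> < \<epsilon> / 2" using assms(1,3) by (simp add: field_simps)
  finally show "r powr q * C + L * u < \<epsilon>" using 1 by simp
qed

lemma Holder_Lipschitz_imp_continuous_map:
  assumes M: "Metric_space M d" and M': "Metric_space M' d'"
    and maps: "\<And>t x. t \<in> {0..1} \<Longrightarrow> x \<in> M \<Longrightarrow> h (t, x) \<in> M'" and "0 < q" "0 \<le> L"
    and bound: "\<And>t s x y. t \<in> {0..1} \<Longrightarrow> s \<in> {0..1} \<Longrightarrow> x \<in> M \<Longrightarrow> y \<in> M \<Longrightarrow>
      d' (h (t, x)) (h (s, y)) \<le> \<bar>t - s\<bar> powr q * C x + L * d x y"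
  shows "continuous_map (prod_topology (top_of_set {0..1}) (Metric_space.mtopology M d))
    (Metric_space.mtopology M' d') h"
proof -
  interpret I: Metric_space "{0..1::real}" dist by (rule Met_TC.subspace) simp
  interpret Metric_space12 "{0..1::real}" dist M d by (simp add: Metric_space12_def I.Metric_space_axioms M)
  have "continuous_map Prod_metric.mtopology (Metric_space.mtopology M' d') h"
    unfolding Prod_metric.metric_continuous_map[OF M']
  proof (intro conjI ballI allI impI)
    show "h ` ({0..1} \<times> M) \<subseteq> M'" using maps by auto
    fix a :: "real \<times> 'a" and \<epsilon> :: real assume a: "a \<in> {0..1} \<times> M" and "0 < \<epsilon>"
    obtain t x where a_eq: "a = (t, x)" by fastforce
    obtain \<delta> where \<delta>: "0 < \<delta>" "\<And>r u. 0 \<le> r \<Longrightarrow> r < \<delta> \<Longrightarrow> u < \<delta> \<Longrightarrow> r powr q * C x + L * u < \<epsilon>"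
      using Holder_Lipschitz_small[OF \<open>0 < \<epsilon>\<close> \<open>0 < q\<close> \<open>0 \<le> L\<close>] by blast
    show "\<exists>\<delta>>0. \<forall>b. b \<in> {0..1} \<times> M \<and> prod_dist dist d a b < \<delta> \<longrightarrow> d' (h a) (h b) < \<epsilon>"
    proof (intro exI[of _ \<delta>] conjI allI impI \<delta>(1))
      fix b assume b: "b \<in> {0..1} \<times> M \<and> prod_dist dist d a b < \<delta>"
      obtain s y where b_eq: "b = (s, y)" by fastforce
      have "\<bar>t - s\<bar> < \<delta>" "d x y < \<delta>"
        using b component_le_prod_metric(1)[of t s x y] component_le_prod_metric(2)[of x y t s]
        by (auto simp: a_eq b_eq dist_real_def)
      then show "d' (h a) (h b) < \<epsilon>"
        using bound[of t s x y] \<delta>(2)[of "\<bar>t - s\<bar>" "d x y"] a b by (auto simp: a_eq b_eq)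
    qed
  qed
  then show ?thesis by (simp add: mtopology_prod_metric top_of_set_unit_interval)
qed

lemma wasserstein_mass_prod_marginals_le:
  assumes "\<pi> \<in> prob_masses (X \<times> Y)" "\<pi>' \<in> prob_masses (X \<times> Y)" "1 \<le> p"
    and X: "Metric_space X d" and Y: "Metric_space Y e"
  shows "wasserstein p (max_dist d e)
      (mass_prod (pushforward fst \<pi>) (pushforward snd \<pi>)) (mass_prod (pushforward fst \<pi>') (pushforward snd \<pi>'))
    \<le> 2 powr (1 / p) * wasserstein p (max_dist d e) \<pi> \<pi>'"
proof -
  have "prob_mass \<pi>" "prob_mass \<pi>'" using assms(1,2) by (auto simp: prob_masses_def)
  then have "prob_mass (pushforward fst \<pi>)" "prob_mass (pushforward fst \<pi>')"
    "prob_mass (pushforward snd \<pi>)" "prob_mass (pushforward snd \<pi>')"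
    by (simp_all add: prob_mass_pushforward)
  then have "wasserstein p (max_dist d e)
      (mass_prod (pushforward fst \<pi>) (pushforward snd \<pi>)) (mass_prod (pushforward fst \<pi>') (pushforward snd \<pi>'))
    \<le> 2 powr (1 / p) * max (wasserstein p d (pushforward fst \<pi>) (pushforward fst \<pi>'))
        (wasserstein p e (pushforward snd \<pi>) (pushforward snd \<pi>'))"
    using assms(3) Metric_space.nonneg[OF X] Metric_space.nonneg[OF Y] by (intro wasserstein_mass_prod_le) auto
  also have "\<dots> = 2 powr (1 / p) * max_dist (wasserstein p d) (wasserstein p e)
      (pushforward fst \<pi>, pushforward snd \<pi>) (pushforward fst \<pi>', pushforward snd \<pi>')"
    by (simp add: max_dist_def)
  also have "\<dots> \<le> 2 powr (1 / p) * wasserstein p (max_dist d e) \<pi> \<pi>'"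
    using assms by (intro mult_left_mono wasserstein_marginals_le) auto
  finally show ?thesis .
qed

lemma continuous_map_mass_prod:
  assumes "Metric_space X d" "Metric_space Y e" "1 \<le> p"
  shows "continuous_map
    (Metric_space.mtopology (realization X K \<phi> \<times> realization Y L \<psi>) (max_dist (wasserstein p d) (wasserstein p e)))
    (Metric_space.mtopology (realization (X \<times> Y) (prod_sc K L) (\<lambda>(x, y). (\<phi> x, \<psi> y))) (wasserstein p (max_dist d e)))
    (\<lambda>(\<mu>, \<nu>). mass_prod \<mu> \<nu>)"
proof (rule Lipschitz_imp_continuous_map_mtopology)
  show "Metric_space (realization X K \<phi> \<times> realization Y L \<psi>) (max_dist (wasserstein p d) (wasserstein p e))"
    using assms by (intro Metric_space_max_dist Metric_space_realization)
  show "Metric_space (realization (X \<times> Y) (prod_sc K L) (\<lambda>(x, y). (\<phi> x, \<psi> y))) (wasserstein p (max_dist d e))"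
    using assms by (intro Metric_space_max_dist Metric_space_realization)
  show "(\<lambda>(\<mu>, \<nu>). mass_prod \<mu> \<nu>) ` (realization X K \<phi> \<times> realization Y L \<psi>)
      \<subseteq> realization (X \<times> Y) (prod_sc K L) (\<lambda>(x, y). (\<phi> x, \<psi> y))"
    by (auto intro: mass_prod_in_realization)
  fix u v assume u: "u \<in> realization X K \<phi> \<times> realization Y L \<psi>" and v: "v \<in> realization X K \<phi> \<times> realization Y L \<psi>"
  obtain \<mu> \<nu> \<mu>' \<nu>' where uv: "u = (\<mu>, \<nu>)" "v = (\<mu>', \<nu>')" by fastforce
  have pm: "prob_mass \<mu>" "prob_mass \<nu>" "prob_mass \<mu>'" "prob_mass \<nu>'"
    using u v by (auto simp: uv intro: prob_mass_realization)
  show "wasserstein p (max_dist d e) ((\<lambda>(\<mu>, \<nu>). mass_prod \<mu> \<nu>) u) ((\<lambda>(\<mu>, \<nu>). mass_prod \<mu> \<nu>) v)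
      \<le> 2 powr (1 / p) * max_dist (wasserstein p d) (wasserstein p e) u v"
    using wasserstein_mass_prod_le[OF pm(1,3,2,4), of p d e] assms
      Metric_space.nonneg[OF assms(1)] Metric_space.nonneg[OF assms(2)]
    by (simp add: uv max_dist_def[of "wasserstein p d"])
qed

lemma continuous_map_marginals:
  assumes "Metric_space X d" "Metric_space Y e" "1 \<le> p"
  shows "continuous_map
    (Metric_space.mtopology (realization (X \<times> Y) (prod_sc K L) (\<lambda>(x, y). (\<phi> x, \<psi> y))) (wasserstein p (max_dist d e)))
    (Metric_space.mtopology (realization X K \<phi> \<times> realization Y L \<psi>) (max_dist (wasserstein p d) (wasserstein p e)))
    (\<lambda>\<pi>. (pushforward fst \<pi>, pushforward snd \<pi>))"
proof (rule Lipschitz_imp_continuous_map_mtopology[where B = 1])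
  show "Metric_space (realization X K \<phi> \<times> realization Y L \<psi>) (max_dist (wasserstein p d) (wasserstein p e))"
    using assms by (intro Metric_space_max_dist Metric_space_realization)
  show "Metric_space (realization (X \<times> Y) (prod_sc K L) (\<lambda>(x, y). (\<phi> x, \<psi> y))) (wasserstein p (max_dist d e))"
    using assms by (intro Metric_space_max_dist Metric_space_realization)
  show "(\<lambda>\<pi>. (pushforward fst \<pi>, pushforward snd \<pi>)) ` realization (X \<times> Y) (prod_sc K L) (\<lambda>(x, y). (\<phi> x, \<psi> y))
      \<subseteq> realization X K \<phi> \<times> realization Y L \<psi>"
    by (auto intro: pushforward_fst_in_realization pushforward_snd_in_realization)
qed (use assms realization_subset_prob_masses in \<open>auto intro!: wasserstein_marginals_le\<close>)

lemma homotopic_mass_prod_marginals_id: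
  fixes \<phi> :: "'a \<Rightarrow> 'v" and \<psi> :: "'b \<Rightarrow> 'w"
  assumes X: "Metric_space X d" and Y: "Metric_space Y e"
    and K: "is_simplicial_complex V K" and L: "is_simplicial_complex W L" and p: "1 \<le> p"
  defines "R \<equiv> realization (X \<times> Y) (prod_sc K L) (\<lambda>(x, y). (\<phi> x, \<psi> y))"
  shows "homotopic_with (\<lambda>_. True)
    (Metric_space.mtopology R (wasserstein p (max_dist d e))) (Metric_space.mtopology R (wasserstein p (max_dist d e)))
    (\<lambda>\<pi>. mass_prod (pushforward fst \<pi>) (pushforward snd \<pi>)) id"
proof -
  let ?W = "wasserstein p (max_dist d e)" and ?\<rho> = "\<lambda>\<pi>. mass_prod (pushforward fst \<pi>) (pushforward snd \<pi>)"
  define H :: "real \<times> ('a \<times> 'b \<Rightarrow> real) \<Rightarrow> 'a \<times> 'b \<Rightarrow> real"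
    where "H = (\<lambda>(t, \<pi>) z. t * \<pi> z + (1 - t) * ?\<rho> \<pi> z)"
  have XY: "Metric_space (X \<times> Y) (max_dist d e)" using X Y by (rule Metric_space_max_dist)
  have MR: "Metric_space R ?W" unfolding R_def using XY p by (rule Metric_space_realization)
  have \<rho>R: "?\<rho> \<pi> \<in> R" if "\<pi> \<in> R" for \<pi>
    using that unfolding R_def
    by (intro mass_prod_in_realization pushforward_fst_in_realization pushforward_snd_in_realization)
  have mem: "\<pi> \<in> prob_masses (X \<times> Y)" if "\<pi> \<in> R" for \<pi>
    using that realization_subset_prob_masses unfolding R_def by blast
  have bound: "?W (H (t, \<pi>)) (H (s, \<pi>')) \<le> \<bar>t - s\<bar> powr (1 / p) * ?W \<pi> (?\<rho> \<pi>) + (1 + 2 powr (1 / p)) * ?W \<pi> \<pi>'"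
    if "t \<in> {0..1}" "s \<in> {0..1}" "\<pi> \<in> R" "\<pi>' \<in> R" for t s \<pi> \<pi>'
  proof -
    have "?W (H (t, \<pi>)) (H (s, \<pi>')) = ?W (\<lambda>z. t * \<pi> z + (1 - t) * ?\<rho> \<pi> z) (\<lambda>z. s * \<pi>' z + (1 - s) * ?\<rho> \<pi>' z)"
      by (simp add: H_def)
    also have "\<dots> \<le> \<bar>t - s\<bar> powr (1 / p) * ?W \<pi> (?\<rho> \<pi>) + max (?W \<pi> \<pi>') (?W (?\<rho> \<pi>) (?\<rho> \<pi>'))"
      using that by (intro wasserstein_mix_mix_le[OF XY p] mem \<rho>R)
    also have "\<dots> \<le> \<bar>t - s\<bar> powr (1 / p) * ?W \<pi> (?\<rho> \<pi>) + (1 + 2 powr (1 / p)) * ?W \<pi> \<pi>'"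
      using wasserstein_mass_prod_marginals_le[OF mem[OF that(3)] mem[OF that(4)] p X Y]
        Metric_space.nonneg[OF MR, of \<pi> \<pi>'] by (simp add: algebra_simps)
    finally show ?thesis .
  qed
  have HR: "H (t, \<pi>) \<in> R" if "t \<in> {0..1}" "\<pi> \<in> R" for t \<pi>
    using mix_product_of_marginals_in_realization[OF K L that(2)[unfolded R_def] that(1)]
    by (simp add: H_def R_def)
  have "continuous_map (prod_topology (top_of_set {0..1}) (Metric_space.mtopology R ?W)) (Metric_space.mtopology R ?W) H"
    by (rule Holder_Lipschitz_imp_continuous_map[where h = H and C = "\<lambda>\<pi>. ?W \<pi> (?\<rho> \<pi>)",
          OF MR MR HR _ _ bound]) (use p in auto)
  then show ?thesis
    unfolding homotopic_with_def by (intro exI[of _ H]) (simp add: H_def)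
qed

theorem proposition5p1:
  fixes X :: "'a set" and d :: "'a \<Rightarrow> 'a \<Rightarrow> real" and V :: "'v set" and K :: "'v set set"
    and \<phi> :: "'a \<Rightarrow> 'v"
    and Y :: "'b set" and e :: "'b \<Rightarrow> 'b \<Rightarrow> real" and W :: "'w set" and L :: "'w set set"
    and \<psi> :: "'b \<Rightarrow> 'w"
    and p :: real
  assumes "1 \<le> p"
    and "smt_obj X d V K \<phi>"
    and "smt_obj Y e W L \<psi>"
  shows "(Metric_space.mtopology (realization X K \<phi> \<times> realization Y L \<psi>)
              (max_dist (wasserstein p d) (wasserstein p e)))
           homotopy_equivalent_space
           (Metric_space.mtopology (realization (X \<times> Y) (prod_sc K L) (\<lambda>(x, y). (\<phi> x, \<psi> y)))
              (wasserstein p (max_dist d e)))"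
proof -
  have X: "Metric_space X d" and K: "is_simplicial_complex V K"
    and Y: "Metric_space Y e" and L: "is_simplicial_complex W L"
    using assms(2,3) by (auto simp: smt_obj_def)
  let ?F = "\<lambda>(\<mu>, \<nu>). mass_prod \<mu> \<nu>" and ?G = "\<lambda>\<pi>. (pushforward fst \<pi>, pushforward snd \<pi>)"
  let ?R = "realization X K \<phi> \<times> realization Y L \<psi>" and ?WR = "max_dist (wasserstein p d) (wasserstein p e)"
  let ?S = "realization (X \<times> Y) (prod_sc K L) (\<lambda>(x, y). (\<phi> x, \<psi> y))" and ?WS = "wasserstein p (max_dist d e)"
  have F: "continuous_map (Metric_space.mtopology ?R ?WR) (Metric_space.mtopology ?S ?WS) ?F"
    by (rule continuous_map_mass_prod[OF X Y assms(1)])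
  have G: "continuous_map (Metric_space.mtopology ?S ?WS) (Metric_space.mtopology ?R ?WR) ?G"
    by (rule continuous_map_marginals[OF X Y assms(1)])
  have MR: "Metric_space ?R ?WR"
    using X Y assms(1) by (intro Metric_space_max_dist Metric_space_realization)
  have "(?G \<circ> ?F) u = id u" if "u \<in> topspace (Metric_space.mtopology ?R ?WR)" for u
    using that by (auto simp: Metric_space.topspace_mtopology[OF MR] marginals_mass_prod prob_mass_realization)
  then have "homotopic_with (\<lambda>_. True) (Metric_space.mtopology ?R ?WR) (Metric_space.mtopology ?R ?WR) (?G \<circ> ?F) id"
    by (intro homotopic_with_equal continuous_map_compose[OF F G]) auto
  moreover have "homotopic_with (\<lambda>_. True) (Metric_space.mtopology ?S ?WS) (Metric_space.mtopology ?S ?WS) (?F \<circ> ?G) id"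
    using homotopic_mass_prod_marginals_id[OF X Y K L assms(1)] by (simp add: comp_def)
  ultimately show ?thesis
    unfolding homotopy_equivalent_space_def using F G by blast
qed

end
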